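(* Let $\mathcal S$ be a Hilbert space, $B$ a bounded normal operator on $\mathcal S$, and $g\in\mathscr T'$. Then the map $e^{B^*\otimes a(g)}$ is injective on $\mathcal S\hat\otimes\mathcal F_{\rm fin}(\mathscr T)$. Consequently $\langle\Psi,\Phi\rangle_{B,g}:=\langle e^{B^*\otimes a(g)}\Psi,e^{B^*\otimes a(g)}\Phi\rangle_{\mathcal S\otimes\mathcal F(\mathfrak h)}$ is a non-degenerate inner product on $\mathcal S\hat\otimes\mathcal F_{\rm fin}(\mathscr T)$.
   Context: Let $\mathfrak h$ be a complex Hilbert space, $\mathscr T$ a topological vector space continuously embedded in $\mathfrak h$ with dense image, $\mathscr T'$ the space of continuous antilinear functionals on $\mathscr T$; $\langle\varphi,f\rangle:=\overline{\varphi(f)}$ for $\varphi\in\mathscr T'$, $f\in\mathscr T$. $\mathcal F(\mathfrak h)$ is the symmetric Fock space, $\mathcal F_{\rm fin}(\mathscr T)$ the vectors with finitely many nonzero components, the $n$-th in the algebraic symmetric tensor product of $n$ copies of $\mathscr T$. For $g\in\mathscr T'$, $a(g)$ on $\mathcal F_{\rm fin}(\mathscr T)$ is defined linearly by $(a(g)\Psi)_n=\frac{\sqrt{n+1}}{(n+1)!}\sum_{\sigma\in S_{n+1}}\langle g,\psi_{\sigma(1)}\rangle\psi_{\sigma(2)}\otimes\cdots\otimes\psi_{\sigma(n+1)}$ for $\Psi_{n+1}=\psi_1\otimes_s\cdots\otimes_s\psi_{n+1}$. $\hat\otimes$ denotes the algebraic tensor product. $e^{B^*\otimes a(g)}$ is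 defined on $\mathcal S\hat\otimes\mathcal F_{\rm fin}(\mathscr T)$ by linear extension of $e^{B^*\otimes a(g)}(\varphi\otimes\Xi)=\sum_{k\ge0}\frac1{k!}((B^* )^k\varphi)\otimes(a(g)^k\Xi)$ (a finite sum). *)

theory Defs
  imports "HOL-Analysis.Analysis"
begin

text \<open>The inner product is
  antilinear in the first and linear in the second argument.\<close>

class complex_vector = real_vector +
  fixes scaleC :: "complex \<Rightarrow> 'a \<Rightarrow> 'a"  (infixr \<open>*\<^sub>C\<close> 75)
  assumes scaleC_add_right: "a *\<^sub>C (x + y) = a *\<^sub>C x + a *\<^sub>C y"
    and scaleC_add_left: "(a + b) *\<^sub>C x = a *\<^sub>C x + b *\<^sub>C x"
    and scaleC_scaleC: "a *\<^sub>C (b *\<^sub>C x) = (a * b) *\<^sub>C x"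
    and scaleC_one: "1 *\<^sub>C x = x"
    and scaleR_scaleC: "r *\<^sub>R x = complex_of_real r *\<^sub>C x"

class complex_inner = complex_vector + real_normed_vector +
  fixes cinner :: "'a \<Rightarrow> 'a \<Rightarrow> complex"
  assumes cinner_commute: "cinner x y = cnj (cinner y x)"
    and cinner_add_right: "cinner x (y + z) = cinner x y + cinner x z"
    and cinner_scaleC_right: "cinner x (c *\<^sub>C y) = c * cinner x y"
    and cinner_self_real: "Im (cinner x x) = 0"
    and cinner_self_nonneg: "0 \<le> Re (cinner x x)"
    and cinner_self_eq_0: "cinner x x = 0 \<longleftrightarrow> x = 0"
    and norm_eq_sqrt_cinner: "norm x = sqrt (Re (cinner x x))"

class chilbert_space = complex_inner + complete_space

definition clinear :: "('a::complex_vector \<Rightarrow> 'b::complex_vector) \<Rightarrow> bool" where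
  "clinear f \<longleftrightarrow> (\<forall>x y. f (x + y) = f x + f y) \<and> (\<forall>c x. f (c *\<^sub>C x) = c *\<^sub>C f x)"

definition bounded_clinear_op :: "('a::complex_inner \<Rightarrow> 'b::complex_inner) \<Rightarrow> bool" where
  "bounded_clinear_op f \<longleftrightarrow> clinear f \<and> (\<exists>K. \<forall>x. norm (f x) \<le> norm x * K)"

text \<open>\<open>Bs\<close> is the adjoint of \<open>B\<close> (the adjoint is unique, so this pins \<open>Bs = B\<^sup>*\<close>).\<close>
definition is_adjoint :: "('a::complex_inner \<Rightarrow> 'a) \<Rightarrow> ('a \<Rightarrow> 'a) \<Rightarrow> bool" where
  "is_adjoint B Bs \<longleftrightarrow> (\<forall>x y. cinner (Bs x) y = cinner x (B y))"

definition normal_op :: "('a::complex_inner \<Rightarrow> 'a) \<Rightarrow> ('a \<Rightarrow> 'a) \<Rightarrow> bool" where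
  "normal_op B Bs \<longleftrightarrow> (\<forall>x. Bs (B x) = B (Bs x))"

text \<open>The topological vector space \<open>\<T>\<close> continuously and densely embedded in \<open>\<h>\<close>
  is modelled by its image: a complex linear subspace \<open>D\<close> of \<open>\<h>\<close>, carrying its own
  topology \<open>\<tau>\<close> (with \<open>topspace \<tau> = D\<close>) making it a topological vector space, such
  that the inclusion \<open>D \<hookrightarrow> \<h>\<close> is continuous and \<open>D\<close> is dense.\<close>

definition csubspace :: "'a::complex_vector set \<Rightarrow> bool" where
  "csubspace D \<longleftrightarrow> 0 \<in> D \<and> (\<forall>x\<in>D. \<forall>y\<in>D. x + y \<in> D) \<and> (\<forall>c. \<forall>x\<in>D. c *\<^sub>C x \<in> D)"

definition test_space :: "'h::chilbert_space set \<Rightarrow> 'h topology \<Rightarrow> bool" where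
  "test_space D \<tau> \<longleftrightarrow>
     csubspace D \<and> topspace \<tau> = D
   \<and> continuous_map (prod_topology \<tau> \<tau>) \<tau> (\<lambda>(x, y). x + y)
   \<and> continuous_map (prod_topology (euclidean :: complex topology) \<tau>) \<tau> (\<lambda>(c, x). c *\<^sub>C x)
   \<and> continuous_map \<tau> euclidean (\<lambda>x. x)
   \<and> closure D = UNIV"

text \<open>Continuous antilinear functionals on \<open>\<T>\<close> (values outside \<open>D\<close> are irrelevant).\<close>
definition antidual :: "'h::chilbert_space set \<Rightarrow> 'h topology \<Rightarrow> ('h \<Rightarrow> complex) set" where
  "antidual D \<tau> = {g. (\<forall>x\<in>D. \<forall>y\<in>D. g (x + y) = g x + g y)
                     \<and> (\<forall>c. \<forall>x\<in>D. g (c *\<^sub>C x) = cnj c * g x)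
                     \<and> continuous_map \<tau> euclidean g}"

definition pairing :: "('h \<Rightarrow> complex) \<Rightarrow> 'h \<Rightarrow> complex" where
  "pairing \<phi> f = cnj (\<phi> f)"

text \<open>An element of \<open>\<S> \<otimes>alg \<F>_fin(\<T>)\<close> is represented by its partial contraction
  against \<open>\<T>'\<close>: a map \<open>\<Psi>\<close> sending a list \<open>[g\<^sub>1,\<dots>,g\<^sub>n]\<close> of elements of \<open>\<T>'\<close> to
  the vector of \<open>\<S>\<close> obtained by pairing the \<open>n\<close>-particle component with
  \<open>g\<^sub>1 \<otimes> \<dots> \<otimes> g\<^sub>n\<close> (and to 0 if some entry is not in \<open>\<T>'\<close>).  Since \<open>\<T>'\<close>
  separates the points of \<open>\<T>\<close>, this identifies the algebraic tensor product with a
  space of functions.\<close>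

type_synonym ('h, 's) ftensor = "('h \<Rightarrow> complex) list \<Rightarrow> 's"

definition sym_elem ::
  "'h::chilbert_space set \<Rightarrow> 'h topology \<Rightarrow> 's::chilbert_space \<Rightarrow> 'h list \<Rightarrow> ('h, 's) ftensor" where
  "sym_elem D \<tau> \<phi> \<psi>s = (\<lambda>gs.
     if length gs = length \<psi>s \<and> set gs \<subseteq> antidual D \<tau> then
       (complex_of_real (1 / fact (length \<psi>s)) *
          (\<Sum>\<sigma>\<in>{\<sigma>. \<sigma> permutes {..<length \<psi>s}}.
             \<Prod>k<length \<psi>s. pairing (gs ! k) (\<psi>s ! \<sigma> k))) *\<^sub>C \<phi>
     else 0)"

definition rep_of :: "'h::chilbert_space set \<Rightarrow> 'h topology \<Rightarrow> ('h, 's::chilbert_space) ftensor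
     \<Rightarrow> nat \<Rightarrow> (nat \<Rightarrow> 's) \<Rightarrow> (nat \<Rightarrow> 'h list) \<Rightarrow> bool" where
  "rep_of D \<tau> \<Psi> m \<phi> \<psi>s \<longleftrightarrow> (\<forall>i<m. set (\<psi>s i) \<subseteq> D)
                     \<and> \<Psi> = (\<lambda>gs. \<Sum>i<m. sym_elem D \<tau> (\<phi> i) (\<psi>s i) gs)"

definition SFfin :: "'h::chilbert_space set \<Rightarrow> 'h topology \<Rightarrow> ('h, 's::chilbert_space) ftensor set" where
  "SFfin D \<tau> = {\<Psi>. \<exists>m \<phi> \<psi>s. rep_of D \<tau> \<Psi> m \<phi> \<psi>s}"

text \<open>Annihilation operator: \<open>(a(g)\<Psi>)(gs) = sqrt(n+1) \<Psi>(g # gs)\<close>, \<open>n = length gs\<close>;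
  on elementary tensors this is exactly the formula of the paper.\<close>
definition ann :: "('h \<Rightarrow> complex) \<Rightarrow> ('h, 's::chilbert_space) ftensor \<Rightarrow> ('h, 's) ftensor" where
  "ann g \<Psi> = (\<lambda>gs. complex_of_real (sqrt (real (length gs + 1))) *\<^sub>C \<Psi> (g # gs))"

text \<open>\<open>e^{B\<^sup>* \<otimes> a(g)}\<close>: \<open>\<Sum>\<^sub>k (1/k!) (B\<^sup>*)\<^sup>k \<otimes> a(g)\<^sup>k\<close> (a finite sum on \<open>SFfin\<close>).\<close>
definition exp_op :: "('s::chilbert_space \<Rightarrow> 's) \<Rightarrow> ('h \<Rightarrow> complex) \<Rightarrow> ('h, 's) ftensor \<Rightarrow> ('h, 's) ftensor" where
  "exp_op Bs g \<Psi> = (\<lambda>gs. \<Sum>k. complex_of_real (1 / fact k) *\<^sub>C (Bs ^^ k) (((ann g) ^^ k) \<Psi> gs))"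

text \<open>The inner product of \<open>\<S> \<otimes> \<F>(\<h>)\<close> restricted to \<open>SFfin\<close>, computed from any
  pair of representations as finite sums of elementary tensors:
  \<open>\<langle>\<phi>\<otimes>\<psi>\<^sub>1\<otimes>\<^sub>s\<dots>\<otimes>\<^sub>s\<psi>\<^sub>n, \<phi>'\<otimes>\<psi>'\<^sub>1\<otimes>\<^sub>s\<dots>\<otimes>\<^sub>s\<psi>'\<^sub>n\<rangle> = \<langle>\<phi>,\<phi>'\<rangle> (1/n!) \<Sum>\<^sub>\<sigma> \<Prod>\<^sub>k \<langle>\<psi>\<^sub>k,\<psi>'\<^sub>\<sigma>\<^sub>k\<rangle>\<close>,
  different particle numbers being orthogonal.\<close>
definition elem_inner :: "'s::chilbert_space \<Rightarrow> 'h::chilbert_space list \<Rightarrow> 's \<Rightarrow> 'h list \<Rightarrow> complex" where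
  "elem_inner \<phi> \<psi>s \<phi>' \<psi>s' =
     (if length \<psi>s = length \<psi>s' then
        cinner \<phi> \<phi>' * complex_of_real (1 / fact (length \<psi>s)) *
          (\<Sum>\<sigma>\<in>{\<sigma>. \<sigma> permutes {..<length \<psi>s}}. \<Prod>k<length \<psi>s. cinner (\<psi>s ! k) (\<psi>s' ! \<sigma> k))
      else 0)"

definition tinner :: "'h::chilbert_space set \<Rightarrow> 'h topology \<Rightarrow> ('h, 's::chilbert_space) ftensor
     \<Rightarrow> ('h, 's) ftensor \<Rightarrow> complex" where
  "tinner D \<tau> \<Psi> \<Phi> = (THE z. \<forall>m \<phi> \<psi>s m' \<phi>' \<psi>s'.
       rep_of D \<tau> \<Psi> m \<phi> \<psi>s \<longrightarrow> rep_of D \<tau> \<Phi> m' \<phi>' \<psi>s' \<longrightarrow>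
       z = (\<Sum>i<m. \<Sum>j<m'. elem_inner (\<phi> i) (\<psi>s i) (\<phi>' j) (\<psi>s' j)))"

text \<open>A non-degenerate (i.e. positive definite) inner product on a set \<open>V\<close> of
  \<open>ftensor\<close>s (vector operations pointwise): hermitian, linear in the second
  argument, positive definite.\<close>
definition nondeg_inner_on :: "('h, 's::chilbert_space) ftensor set
     \<Rightarrow> (('h, 's) ftensor \<Rightarrow> ('h, 's) ftensor \<Rightarrow> complex) \<Rightarrow> bool" where
  "nondeg_inner_on V p \<longleftrightarrow>
     (\<forall>\<Psi>\<in>V. \<forall>\<Phi>\<in>V. p \<Psi> \<Phi> = cnj (p \<Phi> \<Psi>))
   \<and> (\<forall>\<Psi>\<in>V. \<forall>\<Phi>\<in>V. \<forall>\<Xi>\<in>V. p \<Psi> (\<lambda>gs. \<Phi> gs + \<Xi> gs) = p \<Psi> \<Phi> + p \<Psi> \<Xi>)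
   \<and> (\<forall>\<Psi>\<in>V. \<forall>\<Phi>\<in>V. \<forall>c. p \<Psi> (\<lambda>gs. c *\<^sub>C \<Phi> gs) = c * p \<Psi> \<Phi>)
   \<and> (\<forall>\<Psi>\<in>V. Im (p \<Psi> \<Psi>) = 0 \<and> 0 \<le> Re (p \<Psi> \<Psi>))
   \<and> (\<forall>\<Psi>\<in>V. p \<Psi> \<Psi> = 0 \<longrightarrow> \<Psi> = (\<lambda>gs. 0))"

end

theory Submission
  imports Defs
begin

text \<open>
  In \<open>e\<^bsup>B\<^sup>* \<otimes> a(g)\<^esup> = \<Sum>\<^sub>k (1/k!) (B\<^sup>*)\<^sup>k \<otimes> a(g)\<^sup>k\<close> the \<open>k\<close>-th term reads only the
  \<open>(n + k)\<close>-particle component of a vector to produce its \<open>n\<close>-particle component. So on a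
  vector with at most \<open>N\<close> particles the series is finite, and it is the identity plus terms
  that read strictly higher particle numbers: if two vectors have the same image, they agree
  by downward induction on the particle number.

  The pulled-back form is therefore an inner product once the inner product of
  \<open>\<S> \<otimes> \<F>(\<h>)\<close> is positive definite on \<open>\<S> \<otimes>alg \<F>_fin(\<T>)\<close>. For
  \<open>\<Psi> = \<Sum>\<^sub>i \<phi>\<^sub>i \<otimes> \<psi>\<^sub>i\<^sub>1 \<otimes>\<^sub>s \<dots> \<otimes>\<^sub>s \<psi>\<^sub>i\<^sub>n\<close>, choose by Gram--Schmidt an orthonormal basis
  \<open>e\<^sub>1, \<dots>, e\<^sub>d\<close> in \<open>\<T>\<close> of the span of all \<open>\<psi>\<^sub>i\<^sub>j\<close>. Expanding in this basis gives
  \<open>\<langle>\<Psi>, \<Psi>\<rangle> = \<Sum>\<^sub>n \<Sum>\<^sub>\<alpha> \<parallel>\<Psi>(e\<^sub>\<alpha>\<^sub>1, \<dots>, e\<^sub>\<alpha>\<^sub>n)\<parallel>\<^sup>2\<close>, and if all these coefficients vanish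
  then so does \<open>\<Psi>\<close>, because on that span every functional in \<open>\<T>'\<close> is a Riesz functional.
\<close>

lemma scaleC_zero_right [simp]: "a *\<^sub>C (0::'a::complex_vector) = 0"
  using scaleC_add_right[of a "0::'a" 0] by simp

lemma scaleC_zero_left [simp]: "(0::complex) *\<^sub>C (x::'a::complex_vector) = 0"
  using scaleC_add_left[of 0 0 x] by simp

lemma scaleC_minus_one: "(-1::complex) *\<^sub>C (x::'a::complex_vector) = - x"
  using scaleR_scaleC[of "-1" x] by simp

lemma scaleC_left_commute: "a *\<^sub>C b *\<^sub>C (x::'a::complex_vector) = b *\<^sub>C a *\<^sub>C x"
  by (simp add: scaleC_scaleC mult.commute)

lemma scaleC_sum_left: "(\<Sum>i\<in>A. c i) *\<^sub>C (x::'a::complex_vector) = (\<Sum>i\<in>A. c i *\<^sub>C x)"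
  by (induct A rule: infinite_finite_induct) (auto simp: scaleC_add_left)

lemma scaleC_sum_right: "a *\<^sub>C (\<Sum>i\<in>A. f i) = (\<Sum>i\<in>A. a *\<^sub>C (f i::'a::complex_vector))"
  by (induct A rule: infinite_finite_induct) (auto simp: scaleC_add_right)

lemma cinner_zero_right [simp]: "cinner x (0::'a::complex_inner) = 0"
  using cinner_add_right[of x "0::'a" 0] by simp

lemma cinner_zero_left [simp]: "cinner (0::'a::complex_inner) x = 0"
  using cinner_commute[of 0 x] by simp

lemma cnj_cinner: "cnj (cinner x y) = cinner y (x::'a::complex_inner)"
  by (simp add: cinner_commute[of y x])

lemma cinner_add_left: "cinner (x + y) (z::'a::complex_inner) = cinner x z + cinner y z"
  by (metis cinner_commute cinner_add_right complex_cnj_add)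

lemma cinner_scaleC_left: "cinner (c *\<^sub>C x) (y::'a::complex_inner) = cnj c * cinner x y"
  by (metis cinner_commute cinner_scaleC_right complex_cnj_mult)

lemma cinner_minus_right: "cinner x (- y) = - cinner x (y::'a::complex_inner)"
  using cinner_add_right[of x y "- y"] by (simp add: eq_neg_iff_add_eq_0 add.commute)

lemma cinner_minus_left: "cinner (- x) y = - cinner x (y::'a::complex_inner)"
  by (metis cinner_commute cinner_minus_right complex_cnj_minus)

lemma cinner_diff_right: "cinner x (y - z) = cinner x y - cinner x (z::'a::complex_inner)"
  unfolding diff_conv_add_uminus cinner_add_right cinner_minus_right ..

lemma cinner_diff_left: "cinner (x - y) z = cinner x z - cinner y (z::'a::complex_inner)"
  unfolding diff_conv_add_uminus cinner_add_left cinner_minus_left ..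

lemma cinner_sum_left: "cinner (\<Sum>i\<in>A. f i) (y::'a::complex_inner) = (\<Sum>i\<in>A. cinner (f i) y)"
  by (induct A rule: infinite_finite_induct) (auto simp: cinner_add_left)

lemma cinner_sum_right: "cinner y (\<Sum>i\<in>A. f i) = (\<Sum>i\<in>A. cinner y (f i::'a::complex_inner))"
  by (induct A rule: infinite_finite_induct) (auto simp: cinner_add_right)

lemma cinner_self_eq_norm_square: "cinner x x = complex_of_real ((norm (x::'a::complex_inner))\<^sup>2)"
  using cinner_self_real[of x] cinner_self_nonneg[of x] norm_eq_sqrt_cinner[of x]
  by (simp add: complex_eq_iff)

lemma cinner_eqI: "(\<And>z. cinner x z = cinner y (z::'a::complex_inner)) \<Longrightarrow> x = y"
  using cinner_self_eq_0[of "x - y"] by (simp add: cinner_diff_left)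

lemma Re_cinner_polarization:
  "Re (cinner x (y::'a::complex_inner)) = ((norm (x + y))\<^sup>2 - (norm (x - y))\<^sup>2) / 4"
proof -
  have sq: "(norm z)\<^sup>2 = Re (cinner z z)" for z :: 'a
    by (simp add: cinner_self_eq_norm_square)
  have "Re (cinner y x) = Re (cinner x y)"
    by (subst cinner_commute) simp
  then show ?thesis
    unfolding sq by (simp add: cinner_add_left cinner_add_right cinner_diff_left cinner_diff_right)
qed

lemma continuous_on_cinner_left: "continuous_on UNIV (\<lambda>x. cinner x (h::'a::complex_inner))"
proof -
  have "(\<lambda>x. cinner x h) =
          (\<lambda>x. complex_of_real (Re (cinner x h)) - \<i> * complex_of_real (Re (cinner x (\<i> *\<^sub>C h))))"
    by (rule ext) (simp add: cinner_scaleC_right complex_eq_iff)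
  then show ?thesis
    unfolding Re_cinner_polarization by (simp only:) (intro continuous_intros; simp)
qed

lemma csubspace_add: "csubspace D \<Longrightarrow> x \<in> D \<Longrightarrow> y \<in> D \<Longrightarrow> x + y \<in> D"
  unfolding csubspace_def by blast

lemma csubspace_scaleC: "csubspace D \<Longrightarrow> x \<in> D \<Longrightarrow> c *\<^sub>C x \<in> D"
  unfolding csubspace_def by blast

lemma csubspace_sum:
  assumes "csubspace D" "\<And>a. a \<in> I \<Longrightarrow> f a \<in> D"
  shows "(\<Sum>a\<in>I. f a) \<in> D"
  using assms(2) by (induct I rule: infinite_finite_induct)
    (use assms(1) in \<open>auto simp: csubspace_def\<close>)

lemma csubspace_diff:
  assumes "csubspace D" "x \<in> D" "y \<in> D"
  shows "x - y \<in> D"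
  using csubspace_add[OF assms(1,2) csubspace_scaleC[OF assms(1,3), of "-1"]]
  by (simp add: scaleC_minus_one)

subsection \<open>Orthonormal lists and Gram--Schmidt\<close>

definition orthonormal :: "'a::complex_inner list \<Rightarrow> bool" where
  "orthonormal es \<longleftrightarrow>
     (\<forall>a<length es. \<forall>b<length es. cinner (es ! a) (es ! b) = (if a = b then 1 else 0))"

definition orth_proj :: "'a::complex_inner list \<Rightarrow> 'a \<Rightarrow> 'a" where
  "orth_proj es v = (\<Sum>a<length es. cinner (es ! a) v *\<^sub>C es ! a)"

lemma cinner_orth_proj_right:
  "cinner h (orth_proj es v) = (\<Sum>a<length es. cinner h (es ! a) * cinner (es ! a) v)"
  by (simp add: orth_proj_def cinner_sum_right cinner_scaleC_right mult.commute)

lemma cinner_basis_orth_proj: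
  assumes "orthonormal es" "b < length es"
  shows "cinner (es ! b) (orth_proj es v) = cinner (es ! b) v"
proof -
  have "cinner (es ! b) (orth_proj es v) = (\<Sum>a<length es. if a = b then cinner (es ! a) v else 0)"
    using assms unfolding cinner_orth_proj_right orthonormal_def by (intro sum.cong) auto
  then show ?thesis
    using assms(2) by simp
qed

lemma orth_proj_snoc: "orth_proj (es @ [e]) v = orth_proj es v + cinner e v *\<^sub>C e"
  by (simp add: orth_proj_def nth_append)

lemma orthonormal_snoc:
  assumes "orthonormal es" "\<And>a. a < length es \<Longrightarrow> cinner (es ! a) e = 0" "cinner e e = 1"
  shows "orthonormal (es @ [e])"
proof -
  have "cinner e (es ! a) = 0" if "a < length es" for a
    using assms(2)[OF that] cnj_cinner[of "es ! a" e] by simp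
  with assms show ?thesis
    unfolding orthonormal_def by (auto simp: nth_append less_Suc_eq)
qed

lemma gram_schmidt_step:
  assumes on: "orthonormal es" and u: "u = v - orth_proj es v" "u \<noteq> 0"
  defines "e \<equiv> complex_of_real (1 / norm u) *\<^sub>C u"
  shows "orthonormal (es @ [e])" and "orth_proj (es @ [e]) v = v"
    and "\<And>w. orth_proj es w = w \<Longrightarrow> orth_proj (es @ [e]) w = w"
proof -
  have nu: "norm u \<noteq> 0"
    using u(2) by simp
  have perp: "cinner (es ! a) e = 0" if "a < length es" for a
    unfolding e_def u(1) cinner_scaleC_right cinner_diff_right cinner_basis_orth_proj[OF on that]
    by simp
  then have "cinner e (es ! a) = 0" if "a < length es" for a
    using that cnj_cinner[of "es ! a" e] by simp
  then have perp': "cinner e (orth_proj es w) = 0" for w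
    unfolding cinner_orth_proj_right by simp
  have uu: "cinner u u = complex_of_real (norm u * norm u)"
    by (simp add: cinner_self_eq_norm_square power2_eq_square)
  have "cinner e e = 1"
    unfolding e_def cinner_scaleC_left cinner_scaleC_right uu using nu
    by (simp flip: of_real_mult)
  with on perp show "orthonormal (es @ [e])"
    by (intro orthonormal_snoc)
  have "cinner e v *\<^sub>C e = cinner e u *\<^sub>C e"
    using perp'[of v] by (simp add: u(1) cinner_diff_right)
  also have "\<dots> = u"
    unfolding e_def cinner_scaleC_left scaleC_scaleC uu using nu
    by (simp add: scaleC_one flip: of_real_mult)
  finally show "orth_proj (es @ [e]) v = v"
    by (simp add: orth_proj_snoc u(1))
  show "orth_proj (es @ [e]) w = w" if "orth_proj es w = w" for w
    using perp'[of w] that by (simp add: orth_proj_snoc)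
qed

lemma orth_proj_in_csubspace:
  "csubspace D \<Longrightarrow> set es \<subseteq> D \<Longrightarrow> orth_proj es v \<in> D"
  unfolding orth_proj_def by (auto intro!: csubspace_sum csubspace_scaleC)

lemma gram_schmidt:
  fixes vs :: "'a::complex_inner list"
  assumes D: "csubspace D" and "set vs \<subseteq> D"
  shows "\<exists>es. set es \<subseteq> D \<and> orthonormal es \<and> (\<forall>v\<in>set vs. orth_proj es v = v)"
  using assms(2)
proof (induct vs)
  case Nil
  show ?case
    by (rule exI[of _ "[]"]) (simp add: orthonormal_def)
next
  case (Cons v vs)
  then obtain es where es: "set es \<subseteq> D" "orthonormal es" "\<forall>w\<in>set vs. orth_proj es w = w"
    by auto
  define u where "u = v - orth_proj es v"
  show ?case
  proof (cases "u = 0")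
    case True
    then show ?thesis
      using es by (intro exI[of _ es]) (simp add: u_def)
  next
    case False
    define e where "e = complex_of_real (1 / norm u) *\<^sub>C u"
    have "u \<in> D"
      unfolding u_def using Cons.prems es(1) D by (simp add: csubspace_diff orth_proj_in_csubspace)
    then have "set (es @ [e]) \<subseteq> D"
      using es(1) D by (simp add: e_def csubspace_scaleC)
    with gram_schmidt_step[OF es(2) u_def False] es(3) show ?thesis
      by (intro exI[of _ "es @ [e]"]) (simp add: e_def)
  qed
qed

lemma clinear_add: "clinear f \<Longrightarrow> f (x + y) = f x + f y"
  unfolding clinear_def by blast

lemma clinear_scaleC: "clinear f \<Longrightarrow> f (c *\<^sub>C x) = c *\<^sub>C f x"
  unfolding clinear_def by blast

lemma clinear_zero: "clinear f \<Longrightarrow> f 0 = 0"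
  using clinear_add[of f 0 0] by simp

lemma clinear_sum: "clinear f \<Longrightarrow> f (\<Sum>i\<in>I. x i) = (\<Sum>i\<in>I. f (x i))"
  by (induct I rule: infinite_finite_induct) (simp_all add: clinear_zero clinear_add)

lemma clinear_compose: "clinear f \<Longrightarrow> clinear g \<Longrightarrow> clinear (\<lambda>x. f (g x))"
  unfolding clinear_def by simp

lemma clinear_funpow: "clinear (f :: 'a::complex_vector \<Rightarrow> 'a) \<Longrightarrow> clinear (f ^^ k)"
  by (induct k) (simp_all add: clinear_def)

lemma clinear_scaleC_const: "clinear (\<lambda>x. c *\<^sub>C x)"
  unfolding clinear_def by (simp add: scaleC_add_right scaleC_left_commute)

lemma clinear_adjoint:
  assumes "is_adjoint B Bs"
  shows "clinear Bs"
proof -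
  have "Bs (x + y) = Bs x + Bs y" for x y
    by (rule cinner_eqI) (use assms in \<open>simp add: is_adjoint_def cinner_add_left\<close>)
  moreover have "Bs (c *\<^sub>C x) = c *\<^sub>C Bs x" for c x
    by (rule cinner_eqI) (use assms in \<open>simp add: is_adjoint_def cinner_scaleC_left\<close>)
  ultimately show ?thesis
    unfolding clinear_def by blast
qed

definition riesz :: "'h::complex_inner \<Rightarrow> 'h \<Rightarrow> complex" where
  "riesz h = (\<lambda>x. cinner x h)"

lemma pairing_riesz [simp]: "pairing (riesz h) f = cinner h f"
  by (simp add: pairing_def riesz_def cnj_cinner)

lemma riesz_in_antidual:
  assumes "test_space D \<tau>"
  shows "riesz h \<in> antidual D \<tau>"
proof -
  have "continuous_map \<tau> euclidean (\<lambda>x. x)"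
    using assms unfolding test_space_def by blast
  moreover have "continuous_map euclidean euclidean (riesz h)"
    unfolding riesz_def using continuous_on_cinner_left by simp
  ultimately have "continuous_map \<tau> euclidean (riesz h \<circ> (\<lambda>x. x))"
    by (rule continuous_map_compose)
  then show ?thesis
    unfolding antidual_def riesz_def by (simp add: o_def cinner_add_left cinner_scaleC_left)
qed

lemma set_map_riesz_antidual: "test_space D \<tau> \<Longrightarrow> set (map riesz hs) \<subseteq> antidual D \<tau>"
  using riesz_in_antidual by auto

lemma antidual_add: "g \<in> antidual D \<tau> \<Longrightarrow> x \<in> D \<Longrightarrow> y \<in> D \<Longrightarrow> g (x + y) = g x + g y"
  unfolding antidual_def by blast

lemma antidual_scaleC: "g \<in> antidual D \<tau> \<Longrightarrow> x \<in> D \<Longrightarrow> g (c *\<^sub>C x) = cnj c * g x"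
  unfolding antidual_def by blast

lemma antidual_zero: "g \<in> antidual D \<tau> \<Longrightarrow> csubspace D \<Longrightarrow> g 0 = 0"
  using antidual_add[of g D \<tau> 0 0] by (simp add: csubspace_def)

lemma antidual_sum:
  assumes g: "g \<in> antidual D \<tau>" and D: "csubspace D" and "\<And>a. a \<in> I \<Longrightarrow> x a \<in> D"
  shows "g (\<Sum>a\<in>I. c a *\<^sub>C x a) = (\<Sum>a\<in>I. cnj (c a) * g (x a))"
  using assms(3)
proof (induct I rule: infinite_finite_induct)
  case empty
  then show ?case
    using antidual_zero[OF g D] by simp
next
  case (insert a I)
  have "c a *\<^sub>C x a \<in> D" "(\<Sum>a\<in>I. c a *\<^sub>C x a) \<in> D"
    using insert.prems D by (auto intro!: csubspace_scaleC csubspace_sum)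
  then show ?case
    using insert antidual_add[OF g] antidual_scaleC[OF g] by simp
next
  case (infinite I)
  then show ?case
    using antidual_zero[OF g D] by simp
qed

lemma pairing_antidual_eq_riesz:
  assumes g: "g \<in> antidual D \<tau>" and D: "csubspace D" and es: "set es \<subseteq> D"
    and \<psi>: "orth_proj es \<psi> = \<psi>"
  shows "pairing g \<psi> = cinner (\<Sum>a<length es. g (es ! a) *\<^sub>C es ! a) \<psi>"
proof -
  have "g \<psi> = g (\<Sum>a<length es. cinner (es ! a) \<psi> *\<^sub>C es ! a)"
    using \<psi> by (simp add: orth_proj_def)
  also have "\<dots> = (\<Sum>a<length es. cnj (cinner (es ! a) \<psi>) * g (es ! a))"
    by (rule antidual_sum[OF g D]) (use es in auto)
  finally show ?thesis
    by (simp add: pairing_def cnj_sum cinner_sum_left cinner_scaleC_left mult.commute)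
qed

definition permanent_pairing :: "('h \<Rightarrow> complex) list \<Rightarrow> 'h list \<Rightarrow> complex" where
  "permanent_pairing gs \<psi>s =
     (\<Sum>\<sigma>\<in>{\<sigma>. \<sigma> permutes {..<length \<psi>s}}. \<Prod>k<length \<psi>s. pairing (gs ! k) (\<psi>s ! \<sigma> k))"

lemma sym_elem_apply:
  "sym_elem D \<tau> \<phi> \<psi>s gs =
     (if length gs = length \<psi>s \<and> set gs \<subseteq> antidual D \<tau>
      then (complex_of_real (1 / fact (length \<psi>s)) * permanent_pairing gs \<psi>s) *\<^sub>C \<phi> else 0)"
  by (simp add: sym_elem_def permanent_pairing_def)

lemma sym_elem_clinear: "clinear f \<Longrightarrow> sym_elem D \<tau> (f \<phi>) \<psi>s gs = f (sym_elem D \<tau> \<phi> \<psi>s gs)"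
  by (simp add: sym_elem_apply clinear_scaleC clinear_zero)

definition rotate_index :: "nat \<Rightarrow> nat \<Rightarrow> nat" where
  "rotate_index n k = (if k < n then Suc k else if k = n then 0 else k)"

lemma nth_Cons_rotate_index:
  "length gs = n \<Longrightarrow> j < Suc n \<Longrightarrow> (g # gs) ! rotate_index n j = (gs @ [g]) ! j"
  by (auto simp: rotate_index_def nth_append)

lemma rotate_index_permutes: "rotate_index n permutes {..<Suc n}"
proof -
  have inj: "inj_on (rotate_index n) {..<Suc n}"
    unfolding inj_on_def rotate_index_def by auto
  moreover have "rotate_index n ` {..<Suc n} \<subseteq> {..<Suc n}"
    unfolding rotate_index_def by auto
  ultimately have "bij_betw (rotate_index n) {..<Suc n} {..<Suc n}"
    using endo_inj_surj[of "{..<Suc n}"] by (simp add: bij_betw_def)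
  then show ?thesis
    by (rule bij_imp_permutes) (simp add: rotate_index_def)
qed

lemma prod_pairing_transpose_last:
  assumes len: "length \<psi>s = Suc n" "length gs = n" and b: "b < Suc n" and q: "q permutes {..<n}"
  shows "(\<Prod>j<Suc n. pairing ((gs @ [g]) ! j) (\<psi>s ! (Transposition.transpose n b \<circ> q) j)) =
           pairing g (\<psi>s ! b) * (\<Prod>j<n. pairing (gs ! j) (take n (\<psi>s[b := \<psi>s ! n]) ! q j))"
proof -
  have "(\<Prod>j<n. pairing ((gs @ [g]) ! j) (\<psi>s ! Transposition.transpose n b (q j))) =
          (\<Prod>j<n. pairing (gs ! j) (take n (\<psi>s[b := \<psi>s ! n]) ! q j))"
  proof (rule prod.cong[OF refl])
    fix j assume j: "j \<in> {..<n}"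
    then have "q j < n"
      using permutes_in_image[OF q] by simp
    then show "pairing ((gs @ [g]) ! j) (\<psi>s ! Transposition.transpose n b (q j)) =
                 pairing (gs ! j) (take n (\<psi>s[b := \<psi>s ! n]) ! q j)"
      using j b len by (auto simp: nth_append Transposition.transpose_def nth_list_update)
  qed
  moreover have "q n = n"
    using permutes_not_in[OF q] by simp
  ultimately show ?thesis
    using len by (simp add: nth_append)
qed

text \<open>Moving the first functional to the end lets the last point of \<open>{..<Suc n}\<close> be split off
  with \<open>sum_over_permutations_insert\<close>.\<close>
lemma permanent_pairing_Cons:
  assumes len: "length \<psi>s = Suc n" "length gs = n"
  shows "permanent_pairing (g # gs) \<psi>s =
           (\<Sum>b<Suc n. pairing g (\<psi>s ! b) * permanent_pairing gs (take n (\<psi>s[b := \<psi>s ! n])))"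
proof -
  let ?P = "{\<sigma>. \<sigma> permutes {..<Suc n}}"
  define f where "f \<sigma> = (\<Prod>j<Suc n. pairing ((gs @ [g]) ! j) (\<psi>s ! \<sigma> j))" for \<sigma>
  have "permanent_pairing (g # gs) \<psi>s =
          (\<Sum>\<sigma>\<in>?P. \<Prod>j<Suc n. pairing ((g # gs) ! rotate_index n j) (\<psi>s ! \<sigma> (rotate_index n j)))"
    unfolding permanent_pairing_def len
    by (intro sum.cong refl prod.reindex_bij_betw[symmetric] permutes_imp_bij rotate_index_permutes)
  also have "\<dots> = (\<Sum>\<sigma>\<in>?P. \<Prod>j<Suc n. pairing ((g # gs) ! rotate_index n j) (\<psi>s ! \<sigma> j))"
    using sum_permutations_compose_right[OF rotate_index_permutes[of n],
        of "\<lambda>\<sigma>. \<Prod>j<Suc n. pairing ((g # gs) ! rotate_index n j) (\<psi>s ! \<sigma> j)"]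
    by (simp add: o_def)
  also have "\<dots> = sum f ?P"
    unfolding f_def using len(2) by (intro sum.cong refl prod.cong) (simp_all add: nth_Cons_rotate_index)
  also have "\<dots> = (\<Sum>b\<in>insert n {..<n}. \<Sum>q\<in>{q. q permutes {..<n}}. f (Transposition.transpose n b \<circ> q))"
    using sum_over_permutations_insert[of "{..<n}" n f] by (simp add: lessThan_Suc)
  also have "\<dots> = (\<Sum>b<Suc n. \<Sum>q\<in>{q. q permutes {..<n}}.
                     pairing g (\<psi>s ! b) * (\<Prod>j<n. pairing (gs ! j) (take n (\<psi>s[b := \<psi>s ! n]) ! q j)))"
    unfolding f_def using len by (intro sum.cong prod_pairing_transpose_last) auto
  also have "\<dots> = (\<Sum>b<Suc n. pairing g (\<psi>s ! b) * permanent_pairing gs (take n (\<psi>s[b := \<psi>s ! n])))"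
    unfolding permanent_pairing_def using len by (simp add: sum_distrib_left min_def)
  finally show ?thesis .
qed

lemma sqrt_Suc_div_fact_Suc: "sqrt (Suc n) / fact (Suc n) = 1 / (fact n * sqrt (Suc n))"
proof -
  have "sqrt (Suc n) * (fact n * sqrt (Suc n)) = (fact (Suc n) :: real)"
    by (simp add: fact_Suc mult.left_commute)
  then show ?thesis
    by (simp add: divide_simps)
qed

lemma ann_sym_elem:
  assumes g: "g \<in> antidual D \<tau>" and len: "length \<psi>s = Suc n"
  shows "ann g (sym_elem D \<tau> \<phi> \<psi>s) = (\<lambda>gs. \<Sum>b<Suc n.
           sym_elem D \<tau> ((complex_of_real (1 / sqrt (Suc n)) * pairing g (\<psi>s ! b)) *\<^sub>C \<phi>)
             (take n (\<psi>s[b := \<psi>s ! n])) gs)"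
proof
  fix gs :: "('a \<Rightarrow> complex) list"
  define \<psi>b where "\<psi>b b = take n (\<psi>s[b := \<psi>s ! n])" for b
  have len_\<psi>b: "length (\<psi>b b) = n" for b
    unfolding \<psi>b_def using len by simp
  show "ann g (sym_elem D \<tau> \<phi> \<psi>s) gs = (\<Sum>b<Suc n.
          sym_elem D \<tau> ((complex_of_real (1 / sqrt (Suc n)) * pairing g (\<psi>s ! b)) *\<^sub>C \<phi>) (\<psi>b b) gs)"
  proof (cases "length gs = n \<and> set gs \<subseteq> antidual D \<tau>")
    case True
    have coeff: "complex_of_real (sqrt (Suc n) / fact (Suc n)) =
                   complex_of_real (1 / fact n) * complex_of_real (1 / sqrt (Suc n))"
      unfolding sqrt_Suc_div_fact_Suc by simp
    have "ann g (sym_elem D \<tau> \<phi> \<psi>s) gs =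
            (complex_of_real (sqrt (Suc n) / fact (Suc n)) * permanent_pairing (g # gs) \<psi>s) *\<^sub>C \<phi>"
      using True g len by (simp add: ann_def sym_elem_apply scaleC_scaleC)
    also have "\<dots> = (\<Sum>b<Suc n. (complex_of_real (1 / fact n) * complex_of_real (1 / sqrt (Suc n))
                       * (pairing g (\<psi>s ! b) * permanent_pairing gs (\<psi>b b))) *\<^sub>C \<phi>)"
      unfolding permanent_pairing_Cons[OF len True[THEN conjunct1]] coeff \<psi>b_def sum_distrib_left
      by (rule scaleC_sum_left)
    also have "\<dots> = (\<Sum>b<Suc n. (complex_of_real (1 / fact n) * permanent_pairing gs (\<psi>b b)) *\<^sub>C
                       (complex_of_real (1 / sqrt (Suc n)) * pairing g (\<psi>s ! b)) *\<^sub>C \<phi>)"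
      by (simp add: scaleC_scaleC mult_ac)
    also have "\<dots> = (\<Sum>b<Suc n.
          sym_elem D \<tau> ((complex_of_real (1 / sqrt (Suc n)) * pairing g (\<psi>s ! b)) *\<^sub>C \<phi>) (\<psi>b b) gs)"
      using True len_\<psi>b by (simp add: sym_elem_apply)
    finally show ?thesis .
  next
    case False
    have "sym_elem D \<tau> \<phi> \<psi>s (g # gs) = 0"
      using False len unfolding sym_elem_apply by auto
    moreover have "sym_elem D \<tau> (c *\<^sub>C \<phi>) (\<psi>b b) gs = 0" for c b
      using False len_\<psi>b unfolding sym_elem_apply by auto
    ultimately show ?thesis
      by (simp add: ann_def)
  qed
qed

lemma SFfin_iff:
  "\<Psi> \<in> SFfin D \<tau> \<longleftrightarrow> (\<exists>(m::nat) \<phi> \<psi>s. (\<forall>i<m. set (\<psi>s i) \<subseteq> D)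
     \<and> \<Psi> = (\<lambda>gs. \<Sum>i<m. sym_elem D \<tau> (\<phi> i) (\<psi>s i) gs))"
  by (simp add: SFfin_def rep_of_def)

lemma SFfin_zero: "(\<lambda>gs. 0) \<in> SFfin D \<tau>"
  unfolding SFfin_iff by (rule exI[of _ 0]) simp

lemma sym_elem_in_SFfin: "set \<psi>s \<subseteq> D \<Longrightarrow> sym_elem D \<tau> \<phi> \<psi>s \<in> SFfin D \<tau>"
  unfolding SFfin_iff by (intro exI[of _ 1] exI[of _ "\<lambda>_. \<phi>"] exI[of _ "\<lambda>_. \<psi>s"]) simp

lemma SFfin_add:
  assumes "\<Psi> \<in> SFfin D \<tau>" "\<Phi> \<in> SFfin D \<tau>"
  shows "(\<lambda>gs. \<Psi> gs + \<Phi> gs) \<in> SFfin D \<tau>"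
proof -
  obtain m :: nat and \<phi> \<psi>s where \<Psi>: "\<forall>i<m. set (\<psi>s i) \<subseteq> D" "\<Psi> = (\<lambda>gs. \<Sum>i<m. sym_elem D \<tau> (\<phi> i) (\<psi>s i) gs)"
    using assms(1) unfolding SFfin_iff by blast
  obtain m' :: nat and \<phi>' \<psi>s' where \<Phi>: "\<forall>i<m'. set (\<psi>s' i) \<subseteq> D"
    "\<Phi> = (\<lambda>gs. \<Sum>i<m'. sym_elem D \<tau> (\<phi>' i) (\<psi>s' i) gs)"
    using assms(2) unfolding SFfin_iff by blast
  define \<phi>'' where "\<phi>'' i = (if i < m then \<phi> i else \<phi>' (i - m))" for i
  define \<psi>s'' where "\<psi>s'' i = (if i < m then \<psi>s i else \<psi>s' (i - m))" for i
  have split: "(\<Sum>i<m + k. f i) = (\<Sum>i<m. f i) + (\<Sum>i<k. f (m + i))" for k and f :: "nat \<Rightarrow> 'b"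
    by (induct k) (simp_all add: add.assoc)
  have "\<forall>i<m + m'. set (\<psi>s'' i) \<subseteq> D"
    using \<Psi>(1) \<Phi>(1) unfolding \<psi>s''_def by auto
  moreover have "(\<lambda>gs. \<Psi> gs + \<Phi> gs) = (\<lambda>gs. \<Sum>i<m + m'. sym_elem D \<tau> (\<phi>'' i) (\<psi>s'' i) gs)"
    unfolding split \<Psi>(2) \<Phi>(2) \<phi>''_def \<psi>s''_def by simp
  ultimately show ?thesis
    unfolding SFfin_iff by blast
qed

lemma SFfin_sum:
  "(\<And>k. k \<in> I \<Longrightarrow> F k \<in> SFfin D \<tau>) \<Longrightarrow> (\<lambda>gs. \<Sum>k\<in>I. F k gs) \<in> SFfin D \<tau>"
  by (induct I rule: infinite_finite_induct) (simp_all add: SFfin_zero SFfin_add)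

lemma SFfin_map_clinear:
  assumes f: "clinear f" and "\<Psi> \<in> SFfin D \<tau>"
  shows "(\<lambda>gs. f (\<Psi> gs)) \<in> SFfin D \<tau>"
proof -
  obtain m :: nat and \<phi> \<psi>s where \<Psi>: "\<forall>i<m. set (\<psi>s i) \<subseteq> D" "\<Psi> = (\<lambda>gs. \<Sum>i<m. sym_elem D \<tau> (\<phi> i) (\<psi>s i) gs)"
    using assms(2) unfolding SFfin_iff by blast
  then have "(\<lambda>gs. f (\<Psi> gs)) = (\<lambda>gs. \<Sum>i<m. sym_elem D \<tau> (f (\<phi> i)) (\<psi>s i) gs)"
    by (simp add: clinear_sum[OF f] sym_elem_clinear[OF f])
  with \<Psi>(1) show ?thesis
    unfolding SFfin_iff by (intro exI[of _ m] exI[of _ "\<lambda>i. f (\<phi> i)"] exI[of _ \<psi>s]) simp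
qed

lemma ann_sym_elem_Nil: "ann g (sym_elem D \<tau> \<phi> []) = (\<lambda>gs. 0)"
  by (simp add: ann_def sym_elem_apply)

lemma ann_sum: "ann g (\<lambda>gs. \<Sum>i\<in>I. F i gs) = (\<lambda>gs. \<Sum>i\<in>I. ann g (F i) gs)"
  by (simp add: ann_def scaleC_sum_right)

lemma ann_in_SFfin:
  assumes g: "g \<in> antidual D \<tau>" and "\<Psi> \<in> SFfin D \<tau>"
  shows "ann g \<Psi> \<in> SFfin D \<tau>"
proof -
  obtain m :: nat and \<phi> \<psi>s where \<Psi>: "\<forall>i<m. set (\<psi>s i) \<subseteq> D" "\<Psi> = (\<lambda>gs. \<Sum>i<m. sym_elem D \<tau> (\<phi> i) (\<psi>s i) gs)"
    using assms(2) unfolding SFfin_iff by blast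
  have "ann g (sym_elem D \<tau> (\<phi> i) (\<psi>s i)) \<in> SFfin D \<tau>" if i: "i < m" for i
  proof (cases "\<psi>s i")
    case Nil
    then show ?thesis
      by (simp add: ann_sym_elem_Nil SFfin_zero)
  next
    case (Cons \<psi> \<psi>s')
    then have len: "length (\<psi>s i) = Suc (length \<psi>s')"
      by simp
    have "set (take (length \<psi>s') ((\<psi>s i)[b := \<psi>s i ! length \<psi>s'])) \<subseteq> D" for b
      using \<Psi>(1) i len set_take_subset set_update_subset_insert nth_mem[of _ "\<psi>s i"] by fastforce
    then show ?thesis
      unfolding ann_sym_elem[OF g len] by (intro SFfin_sum sym_elem_in_SFfin)
  qed
  then show ?thesis
    unfolding \<Psi>(2) ann_sum by (intro SFfin_sum) simp
qed

lemma funpow_ann_in_SFfin: "g \<in> antidual D \<tau> \<Longrightarrow> \<Psi> \<in> SFfin D \<tau> \<Longrightarrow> (ann g ^^ k) \<Psi> \<in> SFfin D \<tau>"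
  by (induct k) (simp_all add: ann_in_SFfin)

section \<open>Injectivity of \<open>e\<^bsup>B\<^sup>* \<otimes> a(g)\<^esup>\<close>\<close>

definition vanishes_above :: "nat \<Rightarrow> ('h, 's::zero) ftensor \<Rightarrow> bool" where
  "vanishes_above N \<Psi> \<longleftrightarrow> (\<forall>gs. N < length gs \<longrightarrow> \<Psi> gs = 0)"

lemma vanishes_above_mono: "vanishes_above N \<Psi> \<Longrightarrow> N \<le> N' \<Longrightarrow> vanishes_above N' \<Psi>"
  unfolding vanishes_above_def by auto

lemma SFfin_vanishes_above:
  assumes "\<Psi> \<in> SFfin D \<tau>"
  shows "\<exists>N. vanishes_above N \<Psi>"
proof -
  obtain m :: nat and \<phi> \<psi>s where \<Psi>: "\<Psi> = (\<lambda>gs. \<Sum>i<m. sym_elem D \<tau> (\<phi> i) (\<psi>s i) gs)"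
    using assms unfolding SFfin_iff by blast
  define N where "N = (\<Sum>i<m. length (\<psi>s i))"
  have "sym_elem D \<tau> (\<phi> i) (\<psi>s i) gs = 0" if "i < m" "N < length gs" for i gs
  proof -
    have "length (\<psi>s i) \<le> N"
      unfolding N_def by (rule member_le_sum) (use that in auto)
    with that(2) show ?thesis
      by (simp add: sym_elem_apply)
  qed
  then have "vanishes_above N \<Psi>"
    unfolding vanishes_above_def \<Psi> by simp
  then show ?thesis ..
qed

lemma SFfin_vanishes_above_both:
  assumes "\<Psi> \<in> SFfin D \<tau>" "\<Phi> \<in> SFfin D \<tau>"
  obtains N where "vanishes_above N \<Psi>" "vanishes_above N \<Phi>"
proof -
  obtain N1 N2 where "vanishes_above N1 \<Psi>" "vanishes_above N2 \<Phi>"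
    using SFfin_vanishes_above[OF assms(1)] SFfin_vanishes_above[OF assms(2)] by blast
  then show ?thesis
    using vanishes_above_mono that[of "max N1 N2"] by (meson max.cobounded1 max.cobounded2)
qed

lemma ann_apply: "ann g \<Psi> gs = complex_of_real (sqrt (length gs + 1)) *\<^sub>C \<Psi> (g # gs)"
  by (simp add: ann_def)

lemma funpow_ann_cong:
  "(\<And>xs. length gs + k \<le> length xs \<Longrightarrow> \<Psi> xs = \<Phi> xs) \<Longrightarrow> (ann g ^^ k) \<Psi> gs = (ann g ^^ k) \<Phi> gs"
proof (induct k arbitrary: gs)
  case (Suc k)
  have "(ann g ^^ k) \<Psi> (g # gs) = (ann g ^^ k) \<Phi> (g # gs)"
    by (rule Suc.hyps) (use Suc.prems in simp)
  then show ?case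
    unfolding funpow.simps(2) comp_apply ann_apply by (simp only:)
qed simp

lemma funpow_ann_zero: "(ann g ^^ k) (\<lambda>gs. 0) = (\<lambda>gs. 0 :: 's::chilbert_space)"
  by (induct k) (simp_all add: ann_def)

lemma funpow_ann_add:
  "(ann g ^^ k) (\<lambda>gs. \<Psi> gs + \<Phi> gs) = (\<lambda>gs. (ann g ^^ k) \<Psi> gs + (ann g ^^ k) \<Phi> gs)"
  by (induct k) (simp_all add: ann_def scaleC_add_right)

lemma funpow_ann_scaleC: "(ann g ^^ k) (\<lambda>gs. c *\<^sub>C \<Psi> gs) = (\<lambda>gs. c *\<^sub>C (ann g ^^ k) \<Psi> gs)"
  by (induct k) (simp_all add: ann_def scaleC_left_commute)

lemma funpow_ann_vanishes:
  assumes "vanishes_above N \<Psi>" "N < length gs + k"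
  shows "(ann g ^^ k) \<Psi> gs = 0"
proof -
  have "(ann g ^^ k) \<Psi> gs = (ann g ^^ k) (\<lambda>gs. 0) gs"
    by (rule funpow_ann_cong) (use assms in \<open>auto simp: vanishes_above_def\<close>)
  then show ?thesis
    by (simp add: funpow_ann_zero)
qed

lemma exp_op_eq_finite_sum:
  assumes Bs: "clinear Bs" and "vanishes_above N \<Psi>"
  shows "exp_op Bs g \<Psi> =
           (\<lambda>gs. \<Sum>k<Suc N. complex_of_real (1 / fact k) *\<^sub>C (Bs ^^ k) ((ann g ^^ k) \<Psi> gs))"
  unfolding exp_op_def
proof (intro ext suminf_finite)
  fix gs k assume "k \<notin> {..<Suc N}"
  then have "(ann g ^^ k) \<Psi> gs = 0"
    using funpow_ann_vanishes[OF assms(2)] by simp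
  then show "complex_of_real (1 / fact k) *\<^sub>C (Bs ^^ k) ((ann g ^^ k) \<Psi> gs) = 0"
    using clinear_zero[OF clinear_funpow[OF Bs]] by simp
qed simp

lemma exp_op_in_SFfin:
  assumes Bs: "clinear Bs" and g: "g \<in> antidual D \<tau>" and \<Psi>: "\<Psi> \<in> SFfin D \<tau>"
  shows "exp_op Bs g \<Psi> \<in> SFfin D \<tau>"
proof -
  obtain N where N: "vanishes_above N \<Psi>"
    using SFfin_vanishes_above[OF \<Psi>] by blast
  show ?thesis
    unfolding exp_op_eq_finite_sum[OF Bs N]
    using Bs g \<Psi> by (intro SFfin_sum SFfin_map_clinear[of "\<lambda>x. _ *\<^sub>C (Bs ^^ _) x"]
        clinear_compose[OF clinear_scaleC_const] clinear_funpow funpow_ann_in_SFfin)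
qed

lemma exp_op_add:
  assumes Bs: "clinear Bs" and "\<Psi> \<in> SFfin D \<tau>" "\<Phi> \<in> SFfin D \<tau>"
  shows "exp_op Bs g (\<lambda>gs. \<Psi> gs + \<Phi> gs) = (\<lambda>gs. exp_op Bs g \<Psi> gs + exp_op Bs g \<Phi> gs)"
proof -
  obtain N where N: "vanishes_above N \<Psi>" "vanishes_above N \<Phi>"
    using SFfin_vanishes_above_both[OF assms(2,3)] .
  have sum: "vanishes_above N (\<lambda>gs. \<Psi> gs + \<Phi> gs)"
    using N by (simp add: vanishes_above_def)
  show ?thesis
    unfolding exp_op_eq_finite_sum[OF Bs N(1)] exp_op_eq_finite_sum[OF Bs N(2)]
      exp_op_eq_finite_sum[OF Bs sum] funpow_ann_add clinear_add[OF clinear_funpow[OF Bs]]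
      scaleC_add_right sum.distrib ..
qed

lemma exp_op_scaleC:
  assumes Bs: "clinear Bs" and "\<Psi> \<in> SFfin D \<tau>"
  shows "exp_op Bs g (\<lambda>gs. c *\<^sub>C \<Psi> gs) = (\<lambda>gs. c *\<^sub>C exp_op Bs g \<Psi> gs)"
proof -
  obtain N where N: "vanishes_above N \<Psi>"
    using SFfin_vanishes_above[OF assms(2)] by blast
  have scaled: "vanishes_above N (\<lambda>gs. c *\<^sub>C \<Psi> gs)"
    using N by (simp add: vanishes_above_def)
  show ?thesis
    unfolding exp_op_eq_finite_sum[OF Bs N] exp_op_eq_finite_sum[OF Bs scaled] funpow_ann_scaleC
      clinear_scaleC[OF clinear_funpow[OF Bs]] scaleC_sum_right scaleC_left_commute[of c] ..
qed

text \<open>Only the \<open>k = 0\<close> term of the series reads \<open>\<Psi>\<close> at \<open>gs\<close> itself; all others read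
  longer lists.\<close>
lemma exp_op_eq_imp_eq_at:
  assumes Bs: "clinear Bs" and N: "vanishes_above N \<Psi>" "vanishes_above N \<Phi>"
    and longer: "\<And>xs. length gs < length xs \<Longrightarrow> \<Psi> xs = \<Phi> xs"
    and eq: "exp_op Bs g \<Psi> = exp_op Bs g \<Phi>"
  shows "\<Psi> gs = \<Phi> gs"
proof -
  have "(ann g ^^ Suc k) \<Psi> gs = (ann g ^^ Suc k) \<Phi> gs" for k
    by (rule funpow_ann_cong) (simp add: longer)
  with fun_cong[OF eq, of gs] show ?thesis
    unfolding exp_op_eq_finite_sum[OF Bs N(1)] exp_op_eq_finite_sum[OF Bs N(2)] sum.lessThan_Suc_shift
    by (simp add: scaleC_one)
qed

lemma exp_op_inj_on_SFfin:
  assumes Bs: "clinear Bs"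
  shows "inj_on (exp_op Bs g) (SFfin D \<tau>)"
proof (rule inj_onI)
  fix \<Psi> \<Phi> assume "\<Psi> \<in> SFfin D \<tau>" "\<Phi> \<in> SFfin D \<tau>" and eq: "exp_op Bs g \<Psi> = exp_op Bs g \<Phi>"
  then obtain N where N: "vanishes_above N \<Psi>" "vanishes_above N \<Phi>"
    using SFfin_vanishes_above_both by blast
  have above: "\<Psi> xs = \<Phi> xs" if "N < length xs" for xs
    using N that by (simp add: vanishes_above_def)
  show "\<Psi> = \<Phi>"
  proof
    fix gs
    show "\<Psi> gs = \<Phi> gs"
    proof (induction "N - length gs" arbitrary: gs rule: less_induct)
      case less
      have "\<Psi> xs = \<Phi> xs" if "length gs < length xs" for xs
      proof (cases "N < length xs")
        case True
        then show ?thesis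
          by (rule above)
      next
        case False
        then show ?thesis
          using that by (intro less.hyps) linarith
      qed
      then show ?case
        by (rule exp_op_eq_imp_eq_at[OF Bs N _ eq])
    qed
  qed
qed

section \<open>The inner product of \<open>\<S> \<otimes> \<F>(\<h>)\<close> on the algebraic tensor product\<close>

lemma nondeg_inner_on_pullback:
  assumes p: "nondeg_inner_on V p" and "(\<lambda>gs. 0) \<in> V" and f: "\<And>\<Psi>. \<Psi> \<in> V \<Longrightarrow> f \<Psi> \<in> V" "inj_on f V"
    and f_add: "\<And>\<Psi> \<Phi>. \<Psi> \<in> V \<Longrightarrow> \<Phi> \<in> V \<Longrightarrow> f (\<lambda>gs. \<Psi> gs + \<Phi> gs) = (\<lambda>gs. f \<Psi> gs + f \<Phi> gs)"
    and f_scaleC: "\<And>\<Psi> c. \<Psi> \<in> V \<Longrightarrow> f (\<lambda>gs. c *\<^sub>C \<Psi> gs) = (\<lambda>gs. c *\<^sub>C f \<Psi> gs)"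
  shows "nondeg_inner_on V (\<lambda>\<Psi> \<Phi>. p (f \<Psi>) (f \<Phi>))"
proof -
  have p_herm: "p \<Psi> \<Phi> = cnj (p \<Phi> \<Psi>)"
    and p_scaleC: "p \<Psi> (\<lambda>gs. c *\<^sub>C \<Phi> gs) = c * p \<Psi> \<Phi>" if "\<Psi> \<in> V" "\<Phi> \<in> V" for \<Psi> \<Phi> c
    using p that unfolding nondeg_inner_on_def by blast+
  have p_add: "p \<Psi> (\<lambda>gs. \<Phi> gs + \<Xi> gs) = p \<Psi> \<Phi> + p \<Psi> \<Xi>"
    if "\<Psi> \<in> V" "\<Phi> \<in> V" "\<Xi> \<in> V" for \<Psi> \<Phi> \<Xi>
    using p that unfolding nondeg_inner_on_def by blast
  have p_pos: "Im (p \<Psi> \<Psi>) = 0" "0 \<le> Re (p \<Psi> \<Psi>)"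
    and p_definite: "p \<Psi> \<Psi> = 0 \<Longrightarrow> \<Psi> = (\<lambda>gs. 0)" if "\<Psi> \<in> V" for \<Psi>
    using p that unfolding nondeg_inner_on_def by blast+
  have f_zero: "f (\<lambda>gs. 0) = (\<lambda>gs. 0)"
    using f_scaleC[OF assms(2), of 0] by simp
  show ?thesis
    unfolding nondeg_inner_on_def
  proof (intro conjI ballI allI impI)
    fix \<Psi> \<Phi> \<Xi> c assume V: "\<Psi> \<in> V" "\<Phi> \<in> V" "\<Xi> \<in> V"
    show "p (f \<Psi>) (f \<Phi>) = cnj (p (f \<Phi>) (f \<Psi>))"
      using V by (intro p_herm f(1))
    show "p (f \<Psi>) (f (\<lambda>gs. \<Phi> gs + \<Xi> gs)) = p (f \<Psi>) (f \<Phi>) + p (f \<Psi>) (f \<Xi>)"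
      unfolding f_add[OF V(2,3)] using V by (intro p_add f(1))
    show "p (f \<Psi>) (f (\<lambda>gs. c *\<^sub>C \<Phi> gs)) = c * p (f \<Psi>) (f \<Phi>)"
      unfolding f_scaleC[OF V(2)] using V by (intro p_scaleC f(1))
    show "Im (p (f \<Psi>) (f \<Psi>)) = 0"
      using V by (intro p_pos(1) f(1))
    show "0 \<le> Re (p (f \<Psi>) (f \<Psi>))"
      using V by (intro p_pos(2) f(1))
    assume "p (f \<Psi>) (f \<Psi>) = 0"
    then have "f \<Psi> = f (\<lambda>gs. 0)"
      unfolding f_zero using V by (intro p_definite f(1))
    then show "\<Psi> = (\<lambda>gs. 0)"
      by (rule inj_onD[OF f(2) _ V(1) assms(2)])
  qed
qed

lemma sum_permutations_prod_swap:
  "(\<Sum>\<sigma>\<in>{\<sigma>. \<sigma> permutes {..<n}}. \<Prod>k<n. f (\<sigma> k) k) =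
     (\<Sum>\<sigma>\<in>{\<sigma>. \<sigma> permutes {..<n}}. \<Prod>k<n. f k (\<sigma> k) :: 'a::comm_semiring_1)"
proof -
  have "(\<Sum>\<sigma>\<in>{\<sigma>. \<sigma> permutes {..<n}}. \<Prod>k<n. f (\<sigma> k) k) =
          (\<Sum>\<sigma>\<in>{\<sigma>. \<sigma> permutes {..<n}}. \<Prod>k<n. f k (inv \<sigma> k))"
    by (intro sum.cong refl prod.permutes_inv) simp
  also have "\<dots> = (\<Sum>\<sigma>\<in>{\<sigma>. \<sigma> permutes {..<n}}. \<Prod>k<n. f k (\<sigma> k))"
    by (rule sum_permutations_inverse[symmetric])
  finally show ?thesis .
qed

lemma elem_inner_commute: "elem_inner \<phi> \<psi>s \<phi>' \<psi>s' = cnj (elem_inner \<phi>' \<psi>s' \<phi> \<psi>s)"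
  by (cases "length \<psi>s = length \<psi>s'")
    (simp_all add: elem_inner_def cnj_sum cnj_prod cnj_cinner
      sum_permutations_prod_swap[of "\<lambda>a b. cinner (\<psi>s ! a) (\<psi>s' ! b)"])

lemma permanent_pairing_map_riesz:
  "length hs = length \<psi>s \<Longrightarrow> permanent_pairing (map riesz hs) \<psi>s =
     (\<Sum>\<sigma>\<in>{\<sigma>. \<sigma> permutes {..<length \<psi>s}}. \<Prod>k<length \<psi>s. cinner (hs ! k) (\<psi>s ! \<sigma> k))"
  unfolding permanent_pairing_def by (intro sum.cong refl prod.cong) auto

lemma cinner_sym_elem_map_riesz:
  assumes "test_space D \<tau>"
  shows "cinner \<phi> (sym_elem D \<tau> \<phi>' \<psi>s' (map riesz \<psi>s)) = elem_inner \<phi> \<psi>s \<phi>' \<psi>s'"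
  using set_map_riesz_antidual[OF assms, of \<psi>s] permanent_pairing_map_riesz[of \<psi>s \<psi>s']
  by (simp add: sym_elem_apply elem_inner_def cinner_scaleC_right ac_simps)

definition rep_inner :: "nat \<Rightarrow> (nat \<Rightarrow> 's::chilbert_space) \<Rightarrow> (nat \<Rightarrow> 'h::chilbert_space list)
    \<Rightarrow> nat \<Rightarrow> (nat \<Rightarrow> 's) \<Rightarrow> (nat \<Rightarrow> 'h list) \<Rightarrow> complex" where
  "rep_inner m \<phi> \<psi>s m' \<phi>' \<psi>s' = (\<Sum>i<m. \<Sum>j<m'. elem_inner (\<phi> i) (\<psi>s i) (\<phi>' j) (\<psi>s' j))"

text \<open>Testing the second argument against Riesz functionals shows that \<open>rep_inner\<close> depends
  on its representation only through the represented tensor.\<close>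
lemma rep_inner_eq_sum_cinner:
  assumes "test_space D \<tau>" and "rep_of D \<tau> \<Phi> m' \<phi>' \<psi>s'"
  shows "rep_inner m \<phi> \<psi>s m' \<phi>' \<psi>s' = (\<Sum>i<m. cinner (\<phi> i) (\<Phi> (map riesz (\<psi>s i))))"
  using assms(2)
  by (simp add: rep_of_def rep_inner_def cinner_sum_right cinner_sym_elem_map_riesz[OF assms(1)])

lemma rep_inner_commute: "rep_inner m \<phi> \<psi>s m' \<phi>' \<psi>s' = cnj (rep_inner m' \<phi>' \<psi>s' m \<phi> \<psi>s)"
  unfolding rep_inner_def cnj_sum
  by (subst sum.swap) (simp add: elem_inner_commute[of "\<phi> _" "\<psi>s _"])

lemma rep_inner_independent:
  assumes T: "test_space D \<tau>"
    and \<Psi>: "rep_of D \<tau> \<Psi> m \<phi> \<psi>s" "rep_of D \<tau> \<Psi> n \<zeta> \<eta>s"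
    and \<Phi>: "rep_of D \<tau> \<Phi> m' \<phi>' \<psi>s'" "rep_of D \<tau> \<Phi> n' \<zeta>' \<eta>s'"
  shows "rep_inner n \<zeta> \<eta>s n' \<zeta>' \<eta>s' = rep_inner m \<phi> \<psi>s m' \<phi>' \<psi>s'"
proof -
  have "rep_inner n \<zeta> \<eta>s n' \<zeta>' \<eta>s' = rep_inner n \<zeta> \<eta>s m' \<phi>' \<psi>s'"
    unfolding rep_inner_eq_sum_cinner[OF T \<Phi>(1)] rep_inner_eq_sum_cinner[OF T \<Phi>(2)] ..
  also have "\<dots> = cnj (rep_inner m' \<phi>' \<psi>s' n \<zeta> \<eta>s)"
    by (rule rep_inner_commute)
  also have "rep_inner m' \<phi>' \<psi>s' n \<zeta> \<eta>s = rep_inner m' \<phi>' \<psi>s' m \<phi> \<psi>s"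
    unfolding rep_inner_eq_sum_cinner[OF T \<Psi>(1)] rep_inner_eq_sum_cinner[OF T \<Psi>(2)] ..
  also have "cnj (rep_inner m' \<phi>' \<psi>s' m \<phi> \<psi>s) = rep_inner m \<phi> \<psi>s m' \<phi>' \<psi>s'"
    by (simp add: rep_inner_commute[of m \<phi> \<psi>s])
  finally show ?thesis .
qed

lemma tinner_eq_rep_inner:
  assumes T: "test_space D \<tau>" and \<Psi>: "rep_of D \<tau> \<Psi> m \<phi> \<psi>s" and \<Phi>: "rep_of D \<tau> \<Phi> m' \<phi>' \<psi>s'"
  shows "tinner D \<tau> \<Psi> \<Phi> = rep_inner m \<phi> \<psi>s m' \<phi>' \<psi>s'"
  unfolding tinner_def
proof (rule the_equality)
  show "\<forall>n \<zeta> \<eta>s n' \<zeta>' \<eta>s'. rep_of D \<tau> \<Psi> n \<zeta> \<eta>s \<longrightarrow> rep_of D \<tau> \<Phi> n' \<zeta>' \<eta>s' \<longrightarrow>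
          rep_inner m \<phi> \<psi>s m' \<phi>' \<psi>s' = (\<Sum>i<n. \<Sum>j<n'. elem_inner (\<zeta> i) (\<eta>s i) (\<zeta>' j) (\<eta>s' j))"
    using rep_inner_independent[OF T \<Psi> _ \<Phi>] by (simp add: rep_inner_def)
next
  fix z
  assume "\<forall>n \<zeta> \<eta>s n' \<zeta>' \<eta>s'. rep_of D \<tau> \<Psi> n \<zeta> \<eta>s \<longrightarrow> rep_of D \<tau> \<Phi> n' \<zeta>' \<eta>s' \<longrightarrow>
            z = (\<Sum>i<n. \<Sum>j<n'. elem_inner (\<zeta> i) (\<eta>s i) (\<zeta>' j) (\<eta>s' j))"
  with \<Psi> \<Phi> show "z = rep_inner m \<phi> \<psi>s m' \<phi>' \<psi>s'"
    unfolding rep_inner_def by blast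
qed

lemma SFfin_obtain_rep:
  assumes "\<Psi> \<in> SFfin D \<tau>"
  obtains m \<phi> \<psi>s where "rep_of D \<tau> \<Psi> m \<phi> \<psi>s"
  using assms unfolding SFfin_def by blast

lemma tinner_eq_sum_cinner:
  assumes T: "test_space D \<tau>" and \<Psi>: "rep_of D \<tau> \<Psi> m \<phi> \<psi>s" and \<Phi>: "\<Phi> \<in> SFfin D \<tau>"
  shows "tinner D \<tau> \<Psi> \<Phi> = (\<Sum>i<m. cinner (\<phi> i) (\<Phi> (map riesz (\<psi>s i))))"
proof -
  obtain m' \<phi>' \<psi>s' where \<Phi>': "rep_of D \<tau> \<Phi> m' \<phi>' \<psi>s'"
    using \<Phi> by (rule SFfin_obtain_rep)
  show ?thesis
    unfolding tinner_eq_rep_inner[OF T \<Psi> \<Phi>'] by (rule rep_inner_eq_sum_cinner[OF T \<Phi>'])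
qed

lemma tinner_commute:
  assumes T: "test_space D \<tau>" and "\<Psi> \<in> SFfin D \<tau>" "\<Phi> \<in> SFfin D \<tau>"
  shows "tinner D \<tau> \<Psi> \<Phi> = cnj (tinner D \<tau> \<Phi> \<Psi>)"
proof -
  obtain m \<phi> \<psi>s m' \<phi>' \<psi>s' where "rep_of D \<tau> \<Psi> m \<phi> \<psi>s" "rep_of D \<tau> \<Phi> m' \<phi>' \<psi>s'"
    using assms(2,3) by (meson SFfin_obtain_rep)
  then show ?thesis
    using rep_inner_commute by (simp add: tinner_eq_rep_inner[OF T])
qed

lemma tinner_add_right:
  assumes T: "test_space D \<tau>" and \<Psi>: "\<Psi> \<in> SFfin D \<tau>" and \<Phi>: "\<Phi> \<in> SFfin D \<tau>" "\<Xi> \<in> SFfin D \<tau>"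
  shows "tinner D \<tau> \<Psi> (\<lambda>gs. \<Phi> gs + \<Xi> gs) = tinner D \<tau> \<Psi> \<Phi> + tinner D \<tau> \<Psi> \<Xi>"
proof -
  obtain m \<phi> \<psi>s where r: "rep_of D \<tau> \<Psi> m \<phi> \<psi>s"
    using \<Psi> by (rule SFfin_obtain_rep)
  show ?thesis
    unfolding tinner_eq_sum_cinner[OF T r SFfin_add[OF \<Phi>]] tinner_eq_sum_cinner[OF T r \<Phi>(1)]
      tinner_eq_sum_cinner[OF T r \<Phi>(2)]
    by (simp add: cinner_add_right sum.distrib)
qed

lemma tinner_scaleC_right:
  assumes T: "test_space D \<tau>" and \<Psi>: "\<Psi> \<in> SFfin D \<tau>" and \<Phi>: "\<Phi> \<in> SFfin D \<tau>"
  shows "tinner D \<tau> \<Psi> (\<lambda>gs. c *\<^sub>C \<Phi> gs) = c * tinner D \<tau> \<Psi> \<Phi>"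
proof -
  obtain m \<phi> \<psi>s where r: "rep_of D \<tau> \<Psi> m \<phi> \<psi>s"
    using \<Psi> by (rule SFfin_obtain_rep)
  show ?thesis
    unfolding tinner_eq_sum_cinner[OF T r SFfin_map_clinear[OF clinear_scaleC_const \<Phi>]]
      tinner_eq_sum_cinner[OF T r \<Phi>]
    by (simp add: cinner_scaleC_right sum_distrib_left)
qed

subsection \<open>Positivity\<close>

text \<open>\<open>basis_functionals es n \<alpha>\<close> stands for the \<open>n\<close>-particle basis tensor
  \<open>e\<^sub>\<alpha>\<^sub>0 \<otimes> \<dots> \<otimes> e\<^sub>\<alpha>\<^sub>(\<^sub>n\<^sub>-\<^sub>1\<^sub>)\<close>, seen as a list of Riesz functionals.\<close>
definition basis_functionals :: "'h::chilbert_space list \<Rightarrow> nat \<Rightarrow> (nat \<Rightarrow> nat) \<Rightarrow> ('h \<Rightarrow> complex) list"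
  where "basis_functionals es n \<alpha> = map (\<lambda>k. riesz (es ! \<alpha> k)) [0..<n]"

lemma length_basis_functionals [simp]: "length (basis_functionals es n \<alpha>) = n"
  by (simp add: basis_functionals_def)

lemma set_basis_functionals: "test_space D \<tau> \<Longrightarrow> set (basis_functionals es n \<alpha>) \<subseteq> antidual D \<tau>"
  using riesz_in_antidual unfolding basis_functionals_def by auto

lemma permanent_pairing_basis_functionals:
  "length \<psi>s = n \<Longrightarrow> permanent_pairing (basis_functionals es n \<alpha>) \<psi>s =
     (\<Sum>\<sigma>\<in>{\<sigma>. \<sigma> permutes {..<n}}. \<Prod>k<n. cinner (es ! \<alpha> k) (\<psi>s ! \<sigma> k))"
  unfolding permanent_pairing_def basis_functionals_def by (intro sum.cong refl prod.cong) auto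

lemma sum_permutations_prod_compose:
  assumes \<sigma>: "\<sigma> permutes {..<n}"
  shows "(\<Sum>\<rho>\<in>{\<rho>. \<rho> permutes {..<n}}. \<Prod>k<n. f (\<sigma> k) (\<rho> k)) =
           (\<Sum>\<rho>\<in>{\<rho>. \<rho> permutes {..<n}}. \<Prod>k<n. f k (\<rho> k) :: 'a::comm_semiring_1)"
proof -
  have "(\<Sum>\<rho>\<in>{\<rho>. \<rho> permutes {..<n}}. \<Prod>k<n. f (\<sigma> k) (\<rho> k)) =
          (\<Sum>\<rho>\<in>{\<rho>. \<rho> permutes {..<n}}. \<Prod>k<n. f k (\<rho> (inv \<sigma> k)))"
    by (intro sum.cong refl prod.permutes_inv[OF \<sigma>, where g = "\<lambda>a b. f a (_ b)"])
  also have "\<dots> = (\<Sum>\<rho>\<in>{\<rho>. \<rho> permutes {..<n}}. \<Prod>k<n. f k (\<rho> k))"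
    using sum_permutations_compose_right[OF permutes_inv[OF \<sigma>], of "\<lambda>\<rho>. \<Prod>k<n. f k (\<rho> k)"]
    by (simp add: o_def)
  finally show ?thesis .
qed

lemma sym_elem_basis_functionals_compose:
  assumes T: "test_space D \<tau>" and \<sigma>: "\<sigma> permutes {..<n}"
  shows "sym_elem D \<tau> \<phi> \<psi>s (basis_functionals es n (\<alpha> \<circ> \<sigma>)) = sym_elem D \<tau> \<phi> \<psi>s (basis_functionals es n \<alpha>)"
proof (cases "length \<psi>s = n")
  case True
  have "permanent_pairing (basis_functionals es n (\<alpha> \<circ> \<sigma>)) \<psi>s =
               permanent_pairing (basis_functionals es n \<alpha>) \<psi>s"
    unfolding permanent_pairing_basis_functionals[OF True] o_def
    by (rule sum_permutations_prod_compose[OF \<sigma>, where f = "\<lambda>a b. cinner (es ! \<alpha> a) (\<psi>s ! b)"])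
  then show ?thesis
    using True set_basis_functionals[OF T] by (simp add: sym_elem_apply)
next
  case False
  then show ?thesis
    by (simp add: sym_elem_apply)
qed

lemma sum_PiE_compose_permutes:
  assumes \<sigma>: "\<sigma> permutes {..<n}"
  shows "(\<Sum>\<alpha>\<in>PiE {..<n} (\<lambda>_. B). f \<alpha>) = (\<Sum>\<alpha>\<in>PiE {..<n} (\<lambda>_. B). f (\<alpha> \<circ> \<sigma>))"
proof -
  let ?A = "PiE {..<n} (\<lambda>_. B)"
  have compose_in: "\<alpha> \<circ> \<rho> \<in> ?A" if "\<alpha> \<in> ?A" "\<rho> permutes {..<n}" for \<alpha> \<rho>
    using that permutes_in_image[OF that(2)] permutes_not_in[OF that(2)]
    by (auto simp: PiE_iff extensional_def)
  have "bij_betw (\<lambda>\<alpha>. \<alpha> \<circ> \<sigma>) ?A ?A"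
    by (rule bij_betw_byWitness[where f' = "\<lambda>\<alpha>. \<alpha> \<circ> inv \<sigma>"])
      (use compose_in \<sigma> permutes_inv[OF \<sigma>] permutes_inv_o[OF \<sigma>] in \<open>auto simp: o_assoc[symmetric]\<close>)
  then show ?thesis
    using sum.reindex_bij_betw[of "\<lambda>\<alpha>. \<alpha> \<circ> \<sigma>" ?A ?A f] by simp
qed

lemma sum_permutations_cinner_expansion:
  assumes \<psi>s: "\<forall>\<psi>\<in>set \<psi>s. orth_proj es \<psi> = \<psi>" and len: "length \<psi>s = n"
  shows "(\<Sum>\<sigma>\<in>{\<sigma>. \<sigma> permutes {..<n}}. \<Prod>k<n. cinner (hs ! k) (\<psi>s ! \<sigma> k)) =
           (\<Sum>\<alpha>\<in>PiE {..<n} (\<lambda>_. {..<length es}). (\<Prod>k<n. cinner (hs ! k) (es ! \<alpha> k)) *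
              (\<Sum>\<sigma>\<in>{\<sigma>. \<sigma> permutes {..<n}}. \<Prod>k<n. cinner (es ! \<alpha> k) (\<psi>s ! \<sigma> k)))"
proof -
  let ?A = "PiE {..<n} (\<lambda>_. {..<length es})"
  let ?P = "{\<sigma>. \<sigma> permutes {..<n}}"
  have "(\<Sum>\<sigma>\<in>?P. \<Prod>k<n. cinner (hs ! k) (\<psi>s ! \<sigma> k)) =
          (\<Sum>\<sigma>\<in>?P. \<Prod>k<n. \<Sum>a<length es. cinner (hs ! k) (es ! a) * cinner (es ! a) (\<psi>s ! \<sigma> k))"
  proof (intro sum.cong refl prod.cong)
    fix \<sigma> k assume "\<sigma> \<in> ?P" "k \<in> {..<n}"
    then have "\<psi>s ! \<sigma> k \<in> set \<psi>s"
      using len permutes_in_image[of \<sigma> "{..<n}" k] by simp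
    then show "cinner (hs ! k) (\<psi>s ! \<sigma> k) =
                 (\<Sum>a<length es. cinner (hs ! k) (es ! a) * cinner (es ! a) (\<psi>s ! \<sigma> k))"
      using \<psi>s cinner_orth_proj_right[of "hs ! k" es] by metis
  qed
  also have "\<dots> = (\<Sum>\<sigma>\<in>?P. \<Sum>\<alpha>\<in>?A.
                     (\<Prod>k<n. cinner (hs ! k) (es ! \<alpha> k)) * (\<Prod>k<n. cinner (es ! \<alpha> k) (\<psi>s ! \<sigma> k)))"
    unfolding prod.distrib[symmetric] by (intro sum.cong refl prod_sum_PiE) auto
  also have "\<dots> = (\<Sum>\<alpha>\<in>?A. (\<Prod>k<n. cinner (hs ! k) (es ! \<alpha> k)) *
                     (\<Sum>\<sigma>\<in>?P. \<Prod>k<n. cinner (es ! \<alpha> k) (\<psi>s ! \<sigma> k)))"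
    unfolding sum_distrib_left by (rule sum.swap)
  finally show ?thesis .
qed

lemma sym_elem_map_riesz_expansion:
  assumes T: "test_space D \<tau>" and \<psi>s: "\<forall>\<psi>\<in>set \<psi>s. orth_proj es \<psi> = \<psi>" and len: "length hs = n"
  shows "sym_elem D \<tau> \<phi> \<psi>s (map riesz hs) = (\<Sum>\<alpha>\<in>PiE {..<n} (\<lambda>_. {..<length es}).
           (\<Prod>k<n. cinner (hs ! k) (es ! \<alpha> k)) *\<^sub>C sym_elem D \<tau> \<phi> \<psi>s (basis_functionals es n \<alpha>))"
proof (cases "length \<psi>s = n")
  case True
  define c where "c = complex_of_real (1 / fact n)"
  define P where "P \<alpha> = (\<Prod>k<n. cinner (hs ! k) (es ! \<alpha> k))" for \<alpha>
  define Q where "Q \<alpha> = (\<Sum>\<sigma>\<in>{\<sigma>. \<sigma> permutes {..<n}}. \<Prod>k<n. cinner (es ! \<alpha> k) (\<psi>s ! \<sigma> k))" for \<alpha>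
  have "sym_elem D \<tau> \<phi> \<psi>s (map riesz hs) =
          (c * (\<Sum>\<sigma>\<in>{\<sigma>. \<sigma> permutes {..<n}}. \<Prod>k<n. cinner (hs ! k) (\<psi>s ! \<sigma> k))) *\<^sub>C \<phi>"
    unfolding c_def using True len set_map_riesz_antidual[OF T, of hs] permanent_pairing_map_riesz[of hs \<psi>s]
    by (simp add: sym_elem_apply)
  also have "\<dots> = (\<Sum>\<alpha>\<in>PiE {..<n} (\<lambda>_. {..<length es}). P \<alpha> *\<^sub>C (c * Q \<alpha>) *\<^sub>C \<phi>)"
    unfolding sum_permutations_cinner_expansion[OF \<psi>s True] P_def[symmetric] Q_def[symmetric]
      sum_distrib_left scaleC_sum_left scaleC_scaleC
    by (simp add: ac_simps)
  also have "\<dots> = (\<Sum>\<alpha>\<in>PiE {..<n} (\<lambda>_. {..<length es}). P \<alpha> *\<^sub>C sym_elem D \<tau> \<phi> \<psi>s (basis_functionals es n \<alpha>))"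
    unfolding c_def Q_def using True set_basis_functionals[OF T]
    by (simp add: sym_elem_apply permanent_pairing_basis_functionals)
  finally show ?thesis
    unfolding P_def .
next
  case False
  then show ?thesis
    using len by (simp add: sym_elem_apply)
qed

lemma rep_map_riesz_expansion:
  assumes T: "test_space D \<tau>" and \<Psi>: "\<Psi> = (\<lambda>gs. \<Sum>i<m. sym_elem D \<tau> (\<phi> i) (\<psi>s i) gs)"
    and \<psi>s: "\<forall>i<m. \<forall>\<psi>\<in>set (\<psi>s i). orth_proj es \<psi> = \<psi>"
  shows "\<Psi> (map riesz hs) = (\<Sum>\<alpha>\<in>PiE {..<length hs} (\<lambda>_. {..<length es}).
           (\<Prod>k<length hs. cinner (hs ! k) (es ! \<alpha> k)) *\<^sub>C \<Psi> (basis_functionals es (length hs) \<alpha>))"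
  unfolding \<Psi> scaleC_sum_right
  by (subst sum.swap, rule sum.cong[OF refl], rule sym_elem_map_riesz_expansion[OF T]) (use \<psi>s in auto)

lemma cinner_rep_basis_functionals_left:
  assumes T: "test_space D \<tau>" and \<Psi>: "\<Psi> = (\<lambda>gs. \<Sum>i<m. sym_elem D \<tau> (\<phi> i) (\<psi>s i) gs)"
  shows "cinner (\<Psi> (basis_functionals es n \<alpha>)) \<Xi> = (\<Sum>i<m. if length (\<psi>s i) = n then
           complex_of_real (1 / fact n) *
           (\<Sum>\<sigma>\<in>{\<sigma>. \<sigma> permutes {..<n}}. \<Prod>k<n. cinner (\<psi>s i ! \<sigma> k) (es ! \<alpha> k)) *
           cinner (\<phi> i) \<Xi> else 0)"
  unfolding \<Psi> cinner_sum_left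
proof (rule sum.cong[OF refl])
  fix i
  show "cinner (sym_elem D \<tau> (\<phi> i) (\<psi>s i) (basis_functionals es n \<alpha>)) \<Xi> =
          (if length (\<psi>s i) = n then complex_of_real (1 / fact n) *
             (\<Sum>\<sigma>\<in>{\<sigma>. \<sigma> permutes {..<n}}. \<Prod>k<n. cinner (\<psi>s i ! \<sigma> k) (es ! \<alpha> k)) *
             cinner (\<phi> i) \<Xi> else 0)"
  proof (cases "length (\<psi>s i) = n")
    case True
    have "cnj (permanent_pairing (basis_functionals es n \<alpha>) (\<psi>s i)) =
            (\<Sum>\<sigma>\<in>{\<sigma>. \<sigma> permutes {..<n}}. \<Prod>k<n. cinner (\<psi>s i ! \<sigma> k) (es ! \<alpha> k))"
      unfolding permanent_pairing_basis_functionals[OF True] cnj_sum cnj_prod cnj_cinner ..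
    with True set_basis_functionals[OF T, of es n \<alpha>] show ?thesis
      by (simp add: sym_elem_apply cinner_scaleC_left)
  next
    case False
    then show ?thesis
      by (simp add: sym_elem_apply)
  qed
qed

text \<open>Summing over \<open>\<alpha>\<close> undoes the expansion of \<open>rep_map_riesz_expansion\<close>, for every
  permutation \<open>\<sigma>\<close> of the factors, since \<open>\<Psi>\<close> is symmetric.\<close>
lemma sum_basis_functionals_cinner_right:
  assumes T: "test_space D \<tau>" and \<Psi>: "\<Psi> = (\<lambda>gs. \<Sum>i<m. sym_elem D \<tau> (\<phi> i) (\<psi>s i) gs)"
    and \<psi>s: "\<forall>i<m. \<forall>\<psi>\<in>set (\<psi>s i). orth_proj es \<psi> = \<psi>"
    and len: "length hs = n" and \<sigma>: "\<sigma> permutes {..<n}"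
  shows "(\<Sum>\<alpha>\<in>PiE {..<n} (\<lambda>_. {..<length es}).
            (\<Prod>k<n. cinner (hs ! \<sigma> k) (es ! \<alpha> k)) * cinner \<xi> (\<Psi> (basis_functionals es n \<alpha>))) =
           cinner \<xi> (\<Psi> (map riesz hs))"
proof -
  let ?A = "PiE {..<n} (\<lambda>_. {..<length es})"
  have sym: "\<Psi> (basis_functionals es n (\<alpha> \<circ> \<sigma>)) = \<Psi> (basis_functionals es n \<alpha>)" for \<alpha>
    unfolding \<Psi> by (intro sum.cong refl sym_elem_basis_functionals_compose[OF T \<sigma>])
  have "(\<Prod>k<n. cinner (hs ! \<sigma> k) (es ! \<alpha> (\<sigma> k))) = (\<Prod>k<n. cinner (hs ! k) (es ! \<alpha> k))" for \<alpha>
    using prod.reindex_bij_betw[OF permutes_imp_bij[OF \<sigma>], of "\<lambda>k. cinner (hs ! k) (es ! \<alpha> k)"]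
    by simp
  then have "(\<Sum>\<alpha>\<in>?A. (\<Prod>k<n. cinner (hs ! \<sigma> k) (es ! \<alpha> k)) * cinner \<xi> (\<Psi> (basis_functionals es n \<alpha>))) =
               (\<Sum>\<alpha>\<in>?A. (\<Prod>k<n. cinner (hs ! k) (es ! \<alpha> k)) * cinner \<xi> (\<Psi> (basis_functionals es n \<alpha>)))"
    using sum_PiE_compose_permutes[OF \<sigma>, where B = "{..<length es}" and
        f = "\<lambda>\<alpha>. (\<Prod>k<n. cinner (hs ! \<sigma> k) (es ! \<alpha> k)) * cinner \<xi> (\<Psi> (basis_functionals es n \<alpha>))"]
    by (simp add: sym)
  also have "\<dots> = cinner \<xi> (\<Psi> (map riesz hs))"
    unfolding rep_map_riesz_expansion[OF T \<Psi> \<psi>s] len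
    by (simp add: cinner_sum_right cinner_scaleC_right)
  finally show ?thesis .
qed

lemma sum_cinner_basis_functionals_self:
  assumes T: "test_space D \<tau>" and \<Psi>: "\<Psi> = (\<lambda>gs. \<Sum>i<m. sym_elem D \<tau> (\<phi> i) (\<psi>s i) gs)"
    and \<psi>s: "\<forall>i<m. \<forall>\<psi>\<in>set (\<psi>s i). orth_proj es \<psi> = \<psi>"
  shows "(\<Sum>\<alpha>\<in>PiE {..<n} (\<lambda>_. {..<length es}).
            cinner (\<Psi> (basis_functionals es n \<alpha>)) (\<Psi> (basis_functionals es n \<alpha>))) =
           (\<Sum>i<m. if length (\<psi>s i) = n then cinner (\<phi> i) (\<Psi> (map riesz (\<psi>s i))) else 0)"
proof -
  let ?A = "PiE {..<n} (\<lambda>_. {..<length es})"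
  let ?P = "{\<sigma>. \<sigma> permutes {..<n}}"
  let ?X = "\<lambda>\<alpha>. \<Psi> (basis_functionals es n \<alpha>)"
  define c where "c = complex_of_real (1 / fact n)"
  have "(\<Sum>\<alpha>\<in>?A. cinner (?X \<alpha>) (?X \<alpha>)) = (\<Sum>i<m. \<Sum>\<alpha>\<in>?A. if length (\<psi>s i) = n then
          c * (\<Sum>\<sigma>\<in>?P. \<Prod>k<n. cinner (\<psi>s i ! \<sigma> k) (es ! \<alpha> k)) * cinner (\<phi> i) (?X \<alpha>) else 0)"
    unfolding cinner_rep_basis_functionals_left[OF T \<Psi>] c_def by (rule sum.swap)
  also have "\<dots> = (\<Sum>i<m. if length (\<psi>s i) = n then cinner (\<phi> i) (\<Psi> (map riesz (\<psi>s i))) else 0)"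
  proof (intro sum.cong refl)
    fix i assume "i \<in> {..<m}"
    show "(\<Sum>\<alpha>\<in>?A. if length (\<psi>s i) = n then
             c * (\<Sum>\<sigma>\<in>?P. \<Prod>k<n. cinner (\<psi>s i ! \<sigma> k) (es ! \<alpha> k)) * cinner (\<phi> i) (?X \<alpha>) else 0) =
            (if length (\<psi>s i) = n then cinner (\<phi> i) (\<Psi> (map riesz (\<psi>s i))) else 0)"
    proof (cases "length (\<psi>s i) = n")
      case True
      have "(\<Sum>\<alpha>\<in>?A. c * (\<Sum>\<sigma>\<in>?P. \<Prod>k<n. cinner (\<psi>s i ! \<sigma> k) (es ! \<alpha> k)) * cinner (\<phi> i) (?X \<alpha>)) =
              c * (\<Sum>\<sigma>\<in>?P. \<Sum>\<alpha>\<in>?A. (\<Prod>k<n. cinner (\<psi>s i ! \<sigma> k) (es ! \<alpha> k)) * cinner (\<phi> i) (?X \<alpha>))"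
        by (simp add: sum_distrib_left sum_distrib_right mult.assoc sum.swap[of _ ?A ?P])
      also have "\<dots> = c * (\<Sum>\<sigma>\<in>?P. cinner (\<phi> i) (\<Psi> (map riesz (\<psi>s i))))"
        using sum_basis_functionals_cinner_right[OF T \<Psi> \<psi>s True] by simp
      also have "\<dots> = cinner (\<phi> i) (\<Psi> (map riesz (\<psi>s i)))"
        using card_permutations[of "{..<n}" n] by (simp add: c_def)
      finally show ?thesis
        using True by simp
    qed simp
  qed
  finally show ?thesis .
qed

lemma tinner_self_eq_sum_basis:
  assumes T: "test_space D \<tau>" and r: "rep_of D \<tau> \<Psi> m \<phi> \<psi>s"
    and \<psi>s: "\<forall>i<m. \<forall>\<psi>\<in>set (\<psi>s i). orth_proj es \<psi> = \<psi>" and N: "\<forall>i<m. length (\<psi>s i) \<le> N"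
  shows "tinner D \<tau> \<Psi> \<Psi> = (\<Sum>n\<le>N. \<Sum>\<alpha>\<in>PiE {..<n} (\<lambda>_. {..<length es}).
           cinner (\<Psi> (basis_functionals es n \<alpha>)) (\<Psi> (basis_functionals es n \<alpha>)))"
proof -
  have \<Psi>: "\<Psi> = (\<lambda>gs. \<Sum>i<m. sym_elem D \<tau> (\<phi> i) (\<psi>s i) gs)"
    using r unfolding rep_of_def by blast
  have "(\<Sum>n\<le>N. \<Sum>\<alpha>\<in>PiE {..<n} (\<lambda>_. {..<length es}).
           cinner (\<Psi> (basis_functionals es n \<alpha>)) (\<Psi> (basis_functionals es n \<alpha>))) =
          (\<Sum>i<m. \<Sum>n\<le>N. if length (\<psi>s i) = n then cinner (\<phi> i) (\<Psi> (map riesz (\<psi>s i))) else 0)"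
    unfolding sum_cinner_basis_functionals_self[OF T \<Psi> \<psi>s] by (rule sum.swap)
  also have "\<dots> = (\<Sum>i<m. cinner (\<phi> i) (\<Psi> (map riesz (\<psi>s i))))"
    using N by (intro sum.cong refl) simp
  also have "\<dots> = tinner D \<tau> \<Psi> \<Psi>"
    using r by (intro tinner_eq_sum_cinner[OF T r, symmetric]) (auto simp: SFfin_def)
  finally show ?thesis ..
qed

lemma rep_eq_map_riesz_representers:
  assumes T: "test_space D \<tau>" and es: "set es \<subseteq> D"
    and \<Psi>: "\<Psi> = (\<lambda>gs. \<Sum>i<m. sym_elem D \<tau> (\<phi> i) (\<psi>s i) gs)"
    and \<psi>s: "\<forall>i<m. \<forall>\<psi>\<in>set (\<psi>s i). orth_proj es \<psi> = \<psi>"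
    and gs: "set gs \<subseteq> antidual D \<tau>"
  shows "\<Psi> gs = \<Psi> (map riesz (map (\<lambda>g. \<Sum>a<length es. g (es ! a) *\<^sub>C es ! a) gs))"
  unfolding \<Psi>
proof (intro sum.cong refl)
  fix i assume i: "i \<in> {..<m}"
  have "pairing (gs ! k) (\<psi>s i ! j) =
          pairing (map riesz (map (\<lambda>g. \<Sum>a<length es. g (es ! a) *\<^sub>C es ! a) gs) ! k) (\<psi>s i ! j)"
    if "k < length gs" "j < length (\<psi>s i)" for k j
  proof -
    have "gs ! k \<in> antidual D \<tau>"
      using gs that(1) by auto
    moreover have "csubspace D"
      using T unfolding test_space_def by blast
    ultimately show ?thesis
      using pairing_antidual_eq_riesz[OF _ _ es] \<psi>s i that by simp
  qed
  then have "permanent_pairing gs (\<psi>s i) =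
               permanent_pairing (map riesz (map (\<lambda>g. \<Sum>a<length es. g (es ! a) *\<^sub>C es ! a) gs)) (\<psi>s i)"
    if "length gs = length (\<psi>s i)"
    unfolding permanent_pairing_def using that permutes_in_image
    by (intro sum.cong refl prod.cong) fastforce+
  with gs show "sym_elem D \<tau> (\<phi> i) (\<psi>s i) gs =
          sym_elem D \<tau> (\<phi> i) (\<psi>s i) (map riesz (map (\<lambda>g. \<Sum>a<length es. g (es ! a) *\<^sub>C es ! a) gs))"
    by (simp add: sym_elem_apply riesz_in_antidual[OF T] image_subset_iff)
qed

lemma rep_obtain_orthonormal_basis:
  assumes T: "test_space D \<tau>" and "rep_of D \<tau> \<Psi> m \<phi> \<psi>s"
  obtains es where "set es \<subseteq> D" "orthonormal es" "\<forall>i<m. \<forall>\<psi>\<in>set (\<psi>s i). orth_proj es \<psi> = \<psi>"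
proof -
  have "csubspace D"
    using T unfolding test_space_def by blast
  moreover have "set (concat (map \<psi>s [0..<m])) \<subseteq> D"
    using assms(2) unfolding rep_of_def by auto
  ultimately obtain es where "set es \<subseteq> D" "orthonormal es"
    and "\<forall>v\<in>set (concat (map \<psi>s [0..<m])). orth_proj es v = v"
    using gram_schmidt by blast
  then show ?thesis
    using that by auto
qed

lemma rep_eq_zero_if_basis_coefficients_zero:
  assumes T: "test_space D \<tau>" and es: "set es \<subseteq> D"
    and \<Psi>: "\<Psi> = (\<lambda>gs. \<Sum>i<m. sym_elem D \<tau> (\<phi> i) (\<psi>s i) gs)"
    and \<psi>s: "\<forall>i<m. \<forall>\<psi>\<in>set (\<psi>s i). orth_proj es \<psi> = \<psi>" and N: "\<forall>i<m. length (\<psi>s i) \<le> N"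
    and zero: "\<And>n \<alpha>. n \<le> N \<Longrightarrow> \<alpha> \<in> PiE {..<n} (\<lambda>_. {..<length es}) \<Longrightarrow>
                 \<Psi> (basis_functionals es n \<alpha>) = 0"
  shows "\<Psi> = (\<lambda>gs. 0)"
proof
  fix gs
  show "\<Psi> gs = 0"
  proof (cases "set gs \<subseteq> antidual D \<tau> \<and> length gs \<le> N")
    case True
    let ?hs = "map (\<lambda>g. \<Sum>a<length es. g (es ! a) *\<^sub>C es ! a) gs"
    have "\<Psi> gs = \<Psi> (map riesz ?hs)"
      using rep_eq_map_riesz_representers[OF T es \<Psi> \<psi>s] True by blast
    also have "\<dots> = 0"
      unfolding rep_map_riesz_expansion[OF T \<Psi> \<psi>s] using True zero by (intro sum.neutral) simp
    finally show ?thesis .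
  next
    case False
    then show ?thesis
      unfolding \<Psi> using N by (intro sum.neutral) (auto simp: sym_elem_apply)
  qed
qed

lemma tinner_self_positive:
  assumes T: "test_space D \<tau>" and "\<Psi> \<in> SFfin D \<tau>"
  shows "Im (tinner D \<tau> \<Psi> \<Psi>) = 0" and "0 \<le> Re (tinner D \<tau> \<Psi> \<Psi>)"
    and "tinner D \<tau> \<Psi> \<Psi> = 0 \<Longrightarrow> \<Psi> = (\<lambda>gs. 0)"
proof -
  obtain m \<phi> \<psi>s where r: "rep_of D \<tau> \<Psi> m \<phi> \<psi>s"
    using assms(2) by (rule SFfin_obtain_rep)
  then obtain es where es: "set es \<subseteq> D" "orthonormal es"
    and \<psi>s: "\<forall>i<m. \<forall>\<psi>\<in>set (\<psi>s i). orth_proj es \<psi> = \<psi>"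
    using rep_obtain_orthonormal_basis[OF T] by blast
  define N where "N = (\<Sum>i<m. length (\<psi>s i))"
  have N: "\<forall>i<m. length (\<psi>s i) \<le> N"
    unfolding N_def by (auto intro: member_le_sum)
  define R where "R = (\<Sum>n\<le>N. \<Sum>\<alpha>\<in>PiE {..<n} (\<lambda>_. {..<length es}). (norm (\<Psi> (basis_functionals es n \<alpha>)))\<^sup>2)"
  have tinner_R: "tinner D \<tau> \<Psi> \<Psi> = complex_of_real R"
    unfolding tinner_self_eq_sum_basis[OF T r \<psi>s N] R_def cinner_self_eq_norm_square by simp
  have R: "0 \<le> R"
    unfolding R_def by (intro sum_nonneg) auto
  then show "Im (tinner D \<tau> \<Psi> \<Psi>) = 0" "0 \<le> Re (tinner D \<tau> \<Psi> \<Psi>)"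
    by (simp_all add: tinner_R)
  assume "tinner D \<tau> \<Psi> \<Psi> = 0"
  then have "R = 0"
    by (simp add: tinner_R)
  then have "\<forall>n\<in>{..N}. (\<Sum>\<alpha>\<in>PiE {..<n} (\<lambda>_. {..<length es}).
                (norm (\<Psi> (basis_functionals es n \<alpha>)))\<^sup>2) = 0"
    unfolding R_def by (subst (asm) sum_nonneg_eq_0_iff) (auto intro: sum_nonneg)
  then have "\<Psi> (basis_functionals es n \<alpha>) = 0"
    if "n \<le> N" "\<alpha> \<in> PiE {..<n} (\<lambda>_. {..<length es})" for n \<alpha>
    using that by (subst (asm) sum_nonneg_eq_0_iff) (auto simp: finite_PiE)
  with r show "\<Psi> = (\<lambda>gs. 0)"
    unfolding rep_of_def using rep_eq_zero_if_basis_coefficients_zero[OF T es(1) _ \<psi>s N] by blast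
qed

lemma tinner_nondeg_inner_on:
  assumes T: "test_space D \<tau>"
  shows "nondeg_inner_on (SFfin D \<tau>) (tinner D \<tau>)"
  unfolding nondeg_inner_on_def
  by (intro conjI ballI allI impI tinner_commute[OF T] tinner_add_right[OF T] tinner_scaleC_right[OF T]
      tinner_self_positive[OF T])

theorem proposition3p7:
  fixes B Bs :: "'s::chilbert_space \<Rightarrow> 's"
    and D :: "'h::chilbert_space set" and \<tau> :: "'h topology"
    and g :: "'h \<Rightarrow> complex"
  assumes "test_space D \<tau>"
    and "bounded_clinear_op B"
    and "is_adjoint B Bs"
    and "normal_op B Bs"
    and "g \<in> antidual D \<tau>"
  shows "inj_on (exp_op Bs g) (SFfin D \<tau> :: ('h, 's) ftensor set)
         \<and> nondeg_inner_on (SFfin D \<tau>)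
           (\<lambda>\<Psi> \<Phi>. tinner D \<tau> (exp_op Bs g \<Psi>) (exp_op Bs g \<Phi>))"
proof
  \<comment> \<open>Only the linearity of \<open>B\<^sup>*\<close> enters.\<close>
  have Bs: "clinear Bs"
    using assms(3) by (rule clinear_adjoint)
  show inj: "inj_on (exp_op Bs g) (SFfin D \<tau> :: ('h, 's) ftensor set)"
    by (rule exp_op_inj_on_SFfin[OF Bs])
  show "nondeg_inner_on (SFfin D \<tau>) (\<lambda>\<Psi> \<Phi>. tinner D \<tau> (exp_op Bs g \<Psi>) (exp_op Bs g \<Phi>))"
    by (rule nondeg_inner_on_pullback[OF tinner_nondeg_inner_on[OF assms(1)] SFfin_zero
          exp_op_in_SFfin[OF Bs assms(5)] inj exp_op_add[OF Bs] exp_op_scaleC[OF Bs]])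
qed

end
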